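(* Let $K=\mathbb{Q}(\sqrt{d})$, where $d>1$ is square-free and $d=m^2+r$ with $m,r$ integers, $m>0$, $-m<r\le m$ and $4m\equiv 0 \pmod r$ (i.e. $K$ is of Richaud–Degert type). Suppose that either $d\equiv 2,3 \pmod 4$, or $d\equiv 1\pmod 4$ and $m$ is odd. If $K$ is not unit reducible, then $n_K=2$.
   Context: For a totally real number field $K$ with ring of integers $\mathcal{O}_K$ and unit group $\mathcal{O}_K^\times$, let $K_{>>0}$ be the set of totally positive elements. For $a\in K_{>>0}$, $\mu(a)=\min_{x\in\mathcal{O}_K\setminus\{0\}}\mathrm{Tr}_{K/\mathbb{Q}}(ax^2)$ and $\mathcal{M}(a)=\{x\in\mathcal{O}_K:\mathrm{Tr}_{K/\mathbb{Q}}(ax^2)=\mu(a)\}$. $K$ is unit reducible if $\mu(a)=\min_{u\in\mathcal{O}_K^\times}\mathrm{Tr}_{K/\mathbb{Q}}(au^2)$ for all $a\in K_{>>0}$. The unary form $ax^2$ is perfect if $a$ is the only $b\in K_{>>0}$ with $\mathrm{Tr}_{K/\mathbb{Q}}(bv^2)=\mu(a)$ for all $v\in\mathcal{M}(a)$. Forms $ax^2,bx^2$ are equivalent if $b=au^2$ for some $u\in\mathcal{O}_K^\times$, homothetic if $b=\lambda a$ with rational $\lambda>0$; $n_K$ is the number of classes of perfect unary forms up to equivalence and homothety. *)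

theory Defs
  imports Complex_Main "HOL-Computational_Algebra.Squarefree"
begin

text \<open>Elements of K = Q(sqrt d) are represented as pairs (a,b) of rationals,
  standing for a + b sqrt d.\<close>

type_synonym qelt = "rat \<times> rat"

definition qmul :: "int \<Rightarrow> qelt \<Rightarrow> qelt \<Rightarrow> qelt" where
  "qmul d x y = (fst x * fst y + of_int d * snd x * snd y, fst x * snd y + snd x * fst y)"

definition qscale :: "rat \<Rightarrow> qelt \<Rightarrow> qelt" where
  "qscale l x = (l * fst x, l * snd x)"

definition qtr :: "qelt \<Rightarrow> rat" where
  "qtr x = 2 * fst x"

definition qnorm :: "int \<Rightarrow> qelt \<Rightarrow> rat" where
  "qnorm d x = (fst x)^2 - of_int d * (snd x)^2"

definition emb1 :: "int \<Rightarrow> qelt \<Rightarrow> real" where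
  "emb1 d x = real_of_rat (fst x) + real_of_rat (snd x) * sqrt (real_of_int d)"

definition emb2 :: "int \<Rightarrow> qelt \<Rightarrow> real" where
  "emb2 d x = real_of_rat (fst x) - real_of_rat (snd x) * sqrt (real_of_int d)"

definition totpos :: "int \<Rightarrow> qelt \<Rightarrow> bool" where
  "totpos d x \<longleftrightarrow> emb1 d x > 0 \<and> emb2 d x > 0"

text \<open>Ring of integers: elements whose characteristic polynomial
  X^2 - Tr(x) X + N(x) has integer coefficients.\<close>
definition OK :: "int \<Rightarrow> qelt set" where
  "OK d = {x. qtr x \<in> \<int> \<and> qnorm d x \<in> \<int>}"

definition qunits :: "int \<Rightarrow> qelt set" where
  "qunits d = {u \<in> OK d. \<exists>v \<in> OK d. qmul d u v = (1, 0)}"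

definition tf :: "int \<Rightarrow> qelt \<Rightarrow> qelt \<Rightarrow> rat" where
  "tf d a x = qtr (qmul d a (qmul d x x))"

definition mu :: "int \<Rightarrow> qelt \<Rightarrow> real" where
  "mu d a = Inf ((\<lambda>x. real_of_rat (tf d a x)) ` (OK d - {(0, 0)}))"

definition minvecs :: "int \<Rightarrow> qelt \<Rightarrow> qelt set" where
  "minvecs d a = {x \<in> OK d. real_of_rat (tf d a x) = mu d a}"

definition unit_reducible :: "int \<Rightarrow> bool" where
  "unit_reducible d \<longleftrightarrow> (\<forall>a. totpos d a \<longrightarrow>
      mu d a = Inf ((\<lambda>u. real_of_rat (tf d a u)) ` qunits d))"

definition perfect :: "int \<Rightarrow> qelt \<Rightarrow> bool" where
  "perfect d a \<longleftrightarrow> totpos d a \<and>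
     (\<forall>b. totpos d b \<and> (\<forall>v \<in> minvecs d a. real_of_rat (tf d b v) = mu d a) \<longrightarrow> b = a)"

definition form_rel :: "int \<Rightarrow> qelt \<Rightarrow> qelt \<Rightarrow> bool" where
  "form_rel d a b \<longleftrightarrow> (\<exists>u \<in> qunits d. \<exists>l::rat. l > 0 \<and> b = qscale l (qmul d a (qmul d u u)))"

definition nK :: "int \<Rightarrow> nat" where
  "nK d = card ({a. perfect d a} // {(a, b). perfect d a \<and> perfect d b \<and> form_rel d a b})"

end

theory Submission
  imports Defs
begin

text \<open>Write \<open>Tr(a x\<^sup>2) = a\<^sub>1 x\<^sub>1\<^sup>2 + a\<^sub>2 x\<^sub>2\<^sup>2\<close> in the two real embeddings and order totally
  positive \<open>a\<close> by the slope \<open>a\<^sub>2 / a\<^sub>1\<close>; multiplying \<open>a\<close> by \<open>u\<^sup>2\<close> multiplies the slope by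
  \<open>(u\<^sub>2 / u\<^sub>1)\<^sup>2\<close>. For \<open>\<delta> = m + \<surd>d\<close> (or \<open>(m + \<surd>d) / 2\<close>) of norm \<open>n = -r\<close> (or \<open>-r/4\<close>), the unit
  is \<open>\<epsilon> = \<delta>\<^sup>2 / |n|\<close>, and the form \<open>A = \<surd>d (1 - \<delta>'\<^sup>2)\<close> attains its minimum at \<open>1\<close> and \<open>\<delta>\<close>; this is
  the Richaud-Degert condition, via a reduced binary quadratic form. Then \<open>B = A' \<epsilon>'\<^sup>2\<close> attains
  its minimum at \<open>\<epsilon>\<close> and \<open>\<delta>\<close>, and the slopes of the forms \<open>A \<epsilon>\<^sup>2\<^sup>k\<close> and \<open>B \<epsilon>\<^sup>2\<^sup>k\<close> interlace and
  exhaust all slopes. Consecutive forms share a minimal vector, so every totally positive form lies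
  in a cone spanned by two of them: its minimum is attained at a unit multiple of \<open>\<delta>\<close> or \<open>\<epsilon>\<close>, and
  if it is perfect it is a multiple of one of the two. Hence every perfect form is equivalent to
  \<open>A\<close> or \<open>B\<close>, and both are perfect, having two independent minimal vectors. If \<open>K\<close> is not unit
  reducible, \<open>\<delta>\<close> is not a unit, so \<open>|n| \<noteq> 1\<close> and the only minimal units of \<open>A\<close> are \<open>\<pm>1\<close>; a
  unit relating \<open>A\<close> and \<open>B\<close> would then move \<open>\<delta>\<close> to a vector on which \<open>A\<close> takes the value
  \<open>T\<^sub>A(\<delta>')\<close>, which is not minimal.\<close>

lemma squarefree_mult_square_in_Ints:
  fixes d :: int and y :: rat
  assumes sf: "squarefree d" and h: "of_int d * y^2 \<in> \<int>"
  shows "y \<in> \<int>"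
proof -
  obtain a b where q: "quotient_of y = (a, b)" by (cases "quotient_of y") auto
  have b0: "b > 0" using q quotient_of_denom_pos by blast
  have cop: "coprime a b" using q quotient_of_coprime by blast
  have y: "y = of_int a / of_int b" using q quotient_of_div by blast
  obtain k where k: "of_int d * y^2 = of_int k" using h Ints_cases by metis
  have "of_int d * (of_int a)^2 = (of_int k * (of_int b)^2 :: rat)"
    using k b0 unfolding y by (simp add: field_simps power2_eq_square)
  hence "d * a^2 = k * b^2" by (metis of_int_eq_iff of_int_mult of_int_power)
  hence "b^2 dvd d * a^2" by simp
  moreover have "coprime (b^2) (a^2)" using cop by (simp add: coprime_commute)
  ultimately have "b^2 dvd d" using coprime_dvd_mult_left_iff by blast
  hence "is_unit b" using sf unfolding squarefree_def by (simp add: power2_eq_square)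
  hence "b = 1" using b0 by (simp add: zdvd1_eq)
  thus ?thesis using y by simp
qed

lemma int_square_mod_4: "(X::int)^2 mod 4 = (if even X then 0 else 1)"
proof (cases "even X")
  case False
  then obtain b where "X = 2 * b + 1" by (rule oddE)
  then have "X^2 = 1 + 4 * (b^2 + b)" by (simp add: power2_eq_square algebra_simps)
  then have "X^2 mod 4 = 1 mod 4" by (simp only: mod_mult_self2)
  then show ?thesis using False by simp
qed (auto elim!: evenE simp: power2_eq_square)

lemma reduced_binary_form_lower_bound:
  fixes m b t q :: int
  assumes "\<bar>b\<bar> \<le> m"
  shows "m * (t^2 + q^2 - \<bar>t\<bar> * \<bar>q\<bar>) \<le> m * t^2 + b * t * q + m * q^2"
proof -
  have "\<bar>b * t * q\<bar> \<le> m * (\<bar>t\<bar> * \<bar>q\<bar>)"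
    using mult_right_mono[OF assms, of "\<bar>t\<bar> * \<bar>q\<bar>"] by (simp add: abs_mult mult.assoc)
  then show ?thesis by (simp add: algebra_simps)
qed

lemma reduced_binary_form_ge:
  fixes m b t q :: int
  assumes "m > 0" and "\<bar>b\<bar> \<le> m" and "t \<noteq> 0 \<or> q \<noteq> 0"
  shows "m \<le> m * t^2 + b * t * q + m * q^2"
proof -
  have "2 * (t^2 + q^2 - \<bar>t\<bar> * \<bar>q\<bar>) = t^2 + q^2 + (\<bar>t\<bar> - \<bar>q\<bar>)^2"
    by (simp add: power2_eq_square algebra_simps)
  moreover have "t^2 + q^2 > 0" using assms(3) by (cases "t = 0") (simp_all add: add_pos_nonneg)
  ultimately have "1 \<le> t^2 + q^2 - \<bar>t\<bar> * \<bar>q\<bar>" by (smt (verit) zero_le_power2)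
  then have "m * 1 \<le> m * (t^2 + q^2 - \<bar>t\<bar> * \<bar>q\<bar>)" using assms(1) by simp
  then show ?thesis using reduced_binary_form_lower_bound[OF assms(2), of t q] by linarith
qed

lemma reduced_binary_form_eq_imp_small:
  fixes m b t q :: int
  assumes "m > 0" and "\<bar>b\<bar> \<le> m" and "m * t^2 + b * t * q + m * q^2 = m"
  shows "\<bar>t\<bar> \<le> 1 \<and> \<bar>q\<bar> \<le> 1"
proof -
  have "m * (t^2 + q^2 - \<bar>t\<bar> * \<bar>q\<bar>) \<le> m * 1"
    using reduced_binary_form_lower_bound[OF assms(2), of t q] assms(3) by simp
  then have "t^2 + q^2 - \<bar>t\<bar> * \<bar>q\<bar> \<le> 1" using assms(1) by simp
  moreover have "0 \<le> (\<bar>t\<bar> - \<bar>q\<bar>)^2" by simp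
  moreover have "(\<bar>t\<bar> - \<bar>q\<bar>)^2 = t^2 + q^2 - 2 * (\<bar>t\<bar> * \<bar>q\<bar>)"
    by (simp add: power2_eq_square algebra_simps)
  ultimately have "t^2 + q^2 \<le> 2" by linarith
  then have "t^2 < 4" "q^2 < 4"
    using zero_le_power2[of t] zero_le_power2[of q] by linarith+
  then have "\<bar>t\<bar>^2 < 2^2" "\<bar>q\<bar>^2 < 2^2" by simp_all
  then show ?thesis using power_less_imp_less_base[of "\<bar>t\<bar>" 2 2] power_less_imp_less_base[of "\<bar>q\<bar>" 2 2]
    by simp
qed

lemma power_int_bracket:
  fixes b y :: real
  assumes "b > 1" and "y > 0"
  obtains k :: int where "b powi k \<le> y" and "y < b powi k * b"
proof -
  define k where "k = \<lfloor>log b y\<rfloor>"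
  have pw: "b powr real_of_int j = b powi j" for j
    using assms(1) by (simp add: powr_real_of_int')
  have "b powr k \<le> y \<and> y < b powr (k + 1)"
    using floor_log_eq_powr_iff[OF assms(2,1), of k] unfolding k_def by simp
  then have "b powi k \<le> y" "y < b powi (k + 1)" using pw[of k] pw[of "k + 1"] by simp_all
  moreover have "b powi (k + 1) = b powi k * b" using assms(1) by (simp add: power_int_add_1)
  ultimately show ?thesis using that by simp
qed

definition qadd :: "qelt \<Rightarrow> qelt \<Rightarrow> qelt" where
  "qadd x y = (fst x + fst y, snd x + snd y)"

definition qconj :: "qelt \<Rightarrow> qelt" where
  "qconj x = (fst x, - snd x)"

definition qneg :: "qelt \<Rightarrow> qelt" where
  "qneg x = (- fst x, - snd x)"

fun qpow :: "int \<Rightarrow> qelt \<Rightarrow> nat \<Rightarrow> qelt" where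
  "qpow d x 0 = (1, 0)"
| "qpow d x (Suc n) = qmul d x (qpow d x n)"

section \<open>The field \<open>\<rat>(\<surd>d)\<close> in its two real embeddings\<close>

locale real_quadratic_field =
  fixes d :: int
  assumes d_gt_1: "d > 1" and squarefree_d: "squarefree d"
begin

abbreviation "sd \<equiv> sqrt (real_of_int d)"
abbreviation "e1 \<equiv> emb1 d"
abbreviation "e2 \<equiv> emb2 d"

abbreviation T :: "qelt \<Rightarrow> qelt \<Rightarrow> real" where
  "T a x \<equiv> e1 a * (e1 x)^2 + e2 a * (e2 x)^2"

lemma sqrt_d_square: "sd * sd = real_of_int d"
  using d_gt_1 by simp

lemma sqrt_d_pos: "sd > 0"
  using d_gt_1 by simp

lemma sqrt_d_irrational: "sd \<notin> \<rat>"
proof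
  assume "sd \<in> \<rat>"
  then obtain z where z: "sd = real_of_rat z" by (auto elim: Rats_cases)
  have "real_of_rat (z * z) = real_of_int d" using sqrt_d_square z by (simp add: of_rat_mult)
  hence zz: "z * z = of_int d" by (metis of_rat_eq_iff of_rat_of_int_eq)
  have "of_int d * (z / of_int d)^2 = (1::rat)"
    using d_gt_1 zz by (simp add: field_simps power2_eq_square)
  hence "z / of_int d \<in> \<int>" using squarefree_mult_square_in_Ints[OF squarefree_d] by simp
  then obtain k where "z / of_int d = of_int k" by (auto elim: Ints_cases)
  hence "z = of_int (d * k)" using d_gt_1 by (simp add: field_simps)
  hence "d * k * (d * k) = d" using zz by (metis of_int_eq_iff of_int_mult)
  hence "d * (k * k * d) = d * 1" by (simp add: algebra_simps)
  hence "d dvd 1" using d_gt_1 by (metis dvd_triv_right mult_cancel_left1 not_one_less_zero)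
  thus False using d_gt_1 by (simp add: zdvd1_eq)
qed

lemma rat_sqrt_d_eq_0:
  fixes a b :: rat
  assumes "real_of_rat a + real_of_rat b * sd = 0"
  shows "a = 0 \<and> b = 0"
proof (cases "b = 0")
  case True
  then show ?thesis using assms by simp
next
  case False
  then have "sd = real_of_rat (- a / b)"
    using assms by (simp add: of_rat_divide of_rat_minus field_simps)
  then show ?thesis using sqrt_d_irrational by simp
qed

lemma emb1_mult [simp]: "e1 (qmul d x y) = e1 x * e1 y"
proof -
  have "e1 x * e1 y = real_of_rat (fst x * fst y) + (sd * sd) * real_of_rat (snd x * snd y)
      + real_of_rat (fst x * snd y + snd x * fst y) * sd"
    unfolding emb1_def by (simp add: of_rat_add of_rat_mult algebra_simps)
  then show ?thesis
    unfolding emb1_def qmul_def using d_gt_1 by (simp add: of_rat_add of_rat_mult)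
qed

lemma emb2_mult [simp]: "e2 (qmul d x y) = e2 x * e2 y"
proof -
  have "e2 x * e2 y = real_of_rat (fst x * fst y) + (sd * sd) * real_of_rat (snd x * snd y)
      - real_of_rat (fst x * snd y + snd x * fst y) * sd"
    unfolding emb2_def by (simp add: of_rat_add of_rat_mult algebra_simps)
  then show ?thesis
    unfolding emb2_def qmul_def using d_gt_1 by (simp add: of_rat_add of_rat_mult)
qed

lemma emb1_add [simp]: "e1 (qadd x y) = e1 x + e1 y"
  unfolding emb1_def qadd_def by (simp add: of_rat_add algebra_simps)
lemma emb2_add [simp]: "e2 (qadd x y) = e2 x + e2 y"
  unfolding emb2_def qadd_def by (simp add: of_rat_add algebra_simps)
lemma emb1_scale [simp]: "e1 (qscale l x) = real_of_rat l * e1 x"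
  unfolding emb1_def qscale_def by (simp add: of_rat_mult algebra_simps)
lemma emb2_scale [simp]: "e2 (qscale l x) = real_of_rat l * e2 x"
  unfolding emb2_def qscale_def by (simp add: of_rat_mult algebra_simps)
lemma emb1_conj [simp]: "e1 (qconj x) = e2 x"
  unfolding emb1_def emb2_def qconj_def by (simp add: of_rat_minus)
lemma emb2_conj [simp]: "e2 (qconj x) = e1 x"
  unfolding emb1_def emb2_def qconj_def by (simp add: of_rat_minus)
lemma emb1_neg [simp]: "e1 (qneg x) = - e1 x"
  unfolding emb1_def qneg_def by (simp add: of_rat_minus)
lemma emb2_neg [simp]: "e2 (qneg x) = - e2 x"
  unfolding emb2_def qneg_def by (simp add: of_rat_minus)
lemma emb1_one [simp]: "e1 (1, 0) = 1"
  unfolding emb1_def by simp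
lemma emb2_one [simp]: "e2 (1, 0) = 1"
  unfolding emb2_def by simp
lemma emb1_zero [simp]: "e1 (0, 0) = 0"
  unfolding emb1_def by simp
lemma emb2_zero [simp]: "e2 (0, 0) = 0"
  unfolding emb2_def by simp
lemma emb1_sqrt [simp]: "e1 (0, 1) = sd"
  unfolding emb1_def by simp
lemma emb2_sqrt [simp]: "e2 (0, 1) = - sd"
  unfolding emb2_def by simp
lemma emb1_pow [simp]: "e1 (qpow d x n) = (e1 x)^n"
  by (induction n) auto
lemma emb2_pow [simp]: "e2 (qpow d x n) = (e2 x)^n"
  by (induction n) auto

lemma emb1_inject: "e1 x = e1 y \<longleftrightarrow> x = y"
proof
  assume "e1 x = e1 y"
  then have "real_of_rat (fst x - fst y) + real_of_rat (snd x - snd y) * sd = 0"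
    unfolding emb1_def by (simp add: of_rat_diff algebra_simps)
  from rat_sqrt_d_eq_0[OF this] show "x = y" by (simp add: prod_eq_iff)
qed simp

lemma emb2_inject: "e2 x = e2 y \<longleftrightarrow> x = y"
proof
  assume "e2 x = e2 y"
  then have "real_of_rat (fst x - fst y) + real_of_rat (snd y - snd x) * sd = 0"
    unfolding emb2_def by (simp add: of_rat_diff algebra_simps)
  from rat_sqrt_d_eq_0[OF this] show "x = y" by (simp add: prod_eq_iff)
qed simp

lemma emb1_eq_0_iff [simp]: "e1 x = 0 \<longleftrightarrow> x = (0, 0)"
  using emb1_inject[of x "(0, 0)"] by simp

lemma emb2_eq_0_iff [simp]: "e2 x = 0 \<longleftrightarrow> x = (0, 0)"
  using emb2_inject[of x "(0, 0)"] by simp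

lemma qtr_emb: "real_of_rat (qtr x) = e1 x + e2 x"
  unfolding qtr_def emb1_def emb2_def by (simp add: of_rat_mult)

lemma qnorm_emb: "real_of_rat (qnorm d x) = e1 x * e2 x"
proof -
  have "e1 x * e2 x = real_of_rat (fst x)^2 - (sd * sd) * real_of_rat (snd x)^2"
    unfolding emb1_def emb2_def by (simp add: power2_eq_square algebra_simps)
  then show ?thesis
    unfolding qnorm_def using d_gt_1 by (simp add: of_rat_diff of_rat_mult of_rat_power)
qed

lemma qnorm_mult: "qnorm d (qmul d x y) = qnorm d x * qnorm d y"
proof -
  have "real_of_rat (qnorm d (qmul d x y)) = real_of_rat (qnorm d x * qnorm d y)"
    by (simp add: qnorm_emb of_rat_mult)
  then show ?thesis by simp
qed

lemma tf_emb: "real_of_rat (tf d a x) = T a x"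
  unfolding tf_def by (simp add: qtr_emb power2_eq_square)

lemma totpos_iff: "totpos d a \<longleftrightarrow> e1 a > 0 \<and> e2 a > 0"
  unfolding totpos_def ..

lemma T_pos: "totpos d a \<Longrightarrow> x \<noteq> (0, 0) \<Longrightarrow> T a x > 0"
  by (simp add: totpos_iff add_pos_nonneg)

lemma T_mult_square: "T (qmul d a (qmul d u u)) x = T a (qmul d u x)"
  by (simp add: power_mult_distrib algebra_simps power2_eq_square)

lemma T_scale: "T (qscale l a) x = real_of_rat l * T a x"
  by (simp add: algebra_simps)

lemma totpos_mult_square:
  assumes "totpos d a" and "w \<noteq> (0, 0)"
  shows "totpos d (qmul d a (qmul d w w))"
proof -
  have "0 < (e1 w)^2" "0 < (e2 w)^2" using assms(2) by simp_all
  then show ?thesis using assms(1) by (simp add: totpos_iff power2_eq_square mult_pos_pos)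
qed

lemma T_neg [simp]: "T a (qneg x) = T a x"
  by simp

lemma OK_half_integer_coords:
  assumes "x \<in> OK d"
  obtains X Y :: int where "x = (of_int X / 2, of_int Y / 2)" and "4 dvd X^2 - d * Y^2"
proof -
  from assms have t: "2 * fst x \<in> \<int>" and n: "qnorm d x \<in> \<int>"
    unfolding OK_def qtr_def by auto
  obtain X where X: "2 * fst x = of_int X" using t by (auto elim: Ints_cases)
  obtain n where nn: "qnorm d x = of_int n" using n by (auto elim: Ints_cases)
  have "of_int d * (2 * snd x)^2 = (2 * fst x)^2 - 4 * qnorm d x"
    unfolding qnorm_def by (simp add: power2_eq_square algebra_simps)
  also have "\<dots> = of_int (X^2 - 4 * n)" using X nn by simp
  finally have "2 * snd x \<in> \<int>"
    using squarefree_mult_square_in_Ints[OF squarefree_d] by (metis Ints_of_int)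
  then obtain Y where Y: "2 * snd x = of_int Y" by (auto elim: Ints_cases)
  have "of_int (X^2 - d * Y^2) = (2 * fst x)^2 - of_int d * (2 * snd x)^2" using X Y by simp
  also have "\<dots> = 4 * qnorm d x" unfolding qnorm_def by (simp add: power2_eq_square algebra_simps)
  also have "\<dots> = of_int (4 * n)" using nn by simp
  finally have "X^2 - d * Y^2 = 4 * n" by (metis of_int_eq_iff)
  moreover have "x = (of_int X / 2, of_int Y / 2)" using X Y by (simp add: prod_eq_iff field_simps)
  ultimately show ?thesis using that by simp
qed

lemma OK_mult:
  assumes "x \<in> OK d" "y \<in> OK d"
  shows "qmul d x y \<in> OK d"
proof -
  obtain X Y where x: "x = (of_int X / 2, of_int Y / 2)" and "4 dvd X^2 - d * Y^2"
    using OK_half_integer_coords[OF assms(1)] .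
  then have "even (X^2 - d * Y^2)" by (meson dvd_trans even_numeral dvd_refl)
  then have p1: "even X \<longleftrightarrow> even d \<or> even Y" by (auto simp: even_mult_iff)
  obtain X' Y' where y: "y = (of_int X' / 2, of_int Y' / 2)" and "4 dvd X'^2 - d * Y'^2"
    using OK_half_integer_coords[OF assms(2)] .
  then have "even (X'^2 - d * Y'^2)" by (meson dvd_trans even_numeral dvd_refl)
  then have p2: "even X' \<longleftrightarrow> even d \<or> even Y'" by (auto simp: even_mult_iff)
  have "even (X * X' + d * Y * Y')" using p1 p2 by (auto simp: even_mult_iff)
  then obtain k where k: "X * X' + d * Y * Y' = 2 * k" by (rule evenE)
  have "qtr (qmul d x y) = of_int (X * X' + d * Y * Y') / 2"
    unfolding qtr_def qmul_def x y by (simp add: field_simps)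
  also have "\<dots> = of_int k" using k by simp
  finally have "qtr (qmul d x y) \<in> \<int>" by simp
  moreover have "qnorm d (qmul d x y) \<in> \<int>"
    using assms unfolding OK_def qnorm_mult by auto
  ultimately show ?thesis unfolding OK_def by simp
qed

lemma OK_conj: "x \<in> OK d \<Longrightarrow> qconj x \<in> OK d"
  unfolding OK_def qtr_def qnorm_def qconj_def by simp

lemma OK_neg: "x \<in> OK d \<Longrightarrow> qneg x \<in> OK d"
  unfolding OK_def qtr_def qnorm_def qneg_def by simp

lemma OK_one: "(1, 0) \<in> OK d"
  unfolding OK_def qtr_def qnorm_def by simp

lemma qnorm_conj: "qnorm d (qconj x) = qnorm d x"
  unfolding qnorm_def qconj_def by simp

lemma qunits_iff_norm: "u \<in> qunits d \<longleftrightarrow> u \<in> OK d \<and> (qnorm d u = 1 \<or> qnorm d u = -1)"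
proof
  assume u: "u \<in> qunits d"
  then obtain v where v: "u \<in> OK d" "v \<in> OK d" "qmul d u v = (1, 0)"
    unfolding qunits_def by auto
  have "qnorm d u * qnorm d v = 1" using qnorm_mult[of u v] v(3) by (simp add: qnorm_def)
  moreover obtain i j where "qnorm d u = of_int i" "qnorm d v = of_int j"
    using v unfolding OK_def by (auto elim!: Ints_cases)
  ultimately have "i * j = 1" by (metis of_int_1 of_int_eq_iff of_int_mult)
  then have "i = 1 \<or> i = -1" using zmult_eq_1_iff by blast
  then show "u \<in> OK d \<and> (qnorm d u = 1 \<or> qnorm d u = -1)"
    using v(1) \<open>qnorm d u = of_int i\<close> by auto
next
  assume u: "u \<in> OK d \<and> (qnorm d u = 1 \<or> qnorm d u = -1)"
  define v where "v = qscale (qnorm d u) (qconj u)"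
  have "v = qconj u \<or> v = qneg (qconj u)" using u unfolding v_def qscale_def qneg_def by auto
  then have "v \<in> OK d" using u OK_conj OK_neg by blast
  moreover have "qmul d u v = (1, 0)"
  proof -
    have "e1 (qmul d u v) = real_of_rat (qnorm d u) * (e1 u * e2 u)" unfolding v_def by simp
    also have "\<dots> = real_of_rat (qnorm d u)^2" by (simp add: qnorm_emb power2_eq_square)
    also have "\<dots> = 1" using u by auto
    finally show ?thesis by (simp add: emb1_inject[symmetric])
  qed
  ultimately show "u \<in> qunits d" unfolding qunits_def using u by blast
qed

lemma qunits_OK: "u \<in> qunits d \<Longrightarrow> u \<in> OK d"
  unfolding qunits_def by auto

lemma qunits_emb_norm: "u \<in> qunits d \<Longrightarrow> e1 u * e2 u = 1 \<or> e1 u * e2 u = -1"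
  unfolding qunits_iff_norm qnorm_emb[symmetric] by auto

lemma qunits_nonzero: "u \<in> qunits d \<Longrightarrow> u \<noteq> (0, 0)"
  using qunits_emb_norm by force

lemma one_qunits: "(1, 0) \<in> qunits d"
  unfolding qunits_iff_norm using OK_one by (simp add: qnorm_def)

lemma qunits_mult: "u \<in> qunits d \<Longrightarrow> w \<in> qunits d \<Longrightarrow> qmul d u w \<in> qunits d"
  unfolding qunits_iff_norm using OK_mult by (auto simp: qnorm_mult)

lemma qunits_conj: "u \<in> qunits d \<Longrightarrow> qconj u \<in> qunits d"
  unfolding qunits_iff_norm using OK_conj by (auto simp: qnorm_conj)

lemma qunits_pow: "u \<in> qunits d \<Longrightarrow> qpow d u n \<in> qunits d"
  by (induction n) (auto intro: qunits_mult one_qunits)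

lemma qunits_inverse:
  assumes "u \<in> qunits d"
  obtains v where "v \<in> qunits d" "e1 u * e1 v = 1" "e2 u * e2 v = 1"
proof -
  obtain v where v: "u \<in> OK d" "v \<in> OK d" "qmul d u v = (1, 0)"
    using assms unfolding qunits_def by auto
  then have "qmul d v u = (1, 0)" by (simp add: emb1_inject[symmetric] mult.commute)
  then have "v \<in> qunits d" using v unfolding qunits_def by auto
  moreover have "e1 u * e1 v = 1" "e2 u * e2 v = 1"
    using arg_cong[OF v(3), of e1] arg_cong[OF v(3), of e2] by simp_all
  ultimately show ?thesis using that by blast
qed

lemma qunits_mult_nonzero:
  "u \<in> qunits d \<Longrightarrow> x \<in> OK d - {(0, 0)} \<Longrightarrow> qmul d u x \<in> OK d - {(0, 0)}"
  using OK_mult qunits_OK qunits_nonzero by (auto simp flip: emb1_eq_0_iff)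

definition minimal_at :: "qelt \<Rightarrow> qelt \<Rightarrow> bool" where
  "minimal_at a c \<longleftrightarrow> c \<in> OK d - {(0, 0)} \<and> (\<forall>x \<in> OK d - {(0, 0)}. T a c \<le> T a x)"

lemma mu_eqI: "minimal_at a c \<Longrightarrow> mu d a = T a c"
  unfolding mu_def minimal_at_def tf_emb by (rule cInf_eq_minimum) auto

lemma minimal_at_minvecs: "minimal_at a c \<Longrightarrow> c \<in> minvecs d a"
  unfolding minvecs_def using mu_eqI by (auto simp: minimal_at_def tf_emb)

lemma minimal_at_tf:
  "minimal_at a c \<longleftrightarrow> c \<in> OK d - {(0, 0)} \<and> (\<forall>x \<in> OK d - {(0, 0)}. tf d a c \<le> tf d a x)"
  unfolding minimal_at_def tf_emb[symmetric] of_rat_less_eq ..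

lemma minimal_at_mult_square:
  assumes u: "u \<in> qunits d" and c: "c \<in> OK d" and min: "minimal_at a (qmul d u c)"
  shows "minimal_at (qmul d a (qmul d u u)) c"
  unfolding minimal_at_def T_mult_square
proof (intro conjI ballI)
  have "qmul d u c \<noteq> (0, 0)" using min unfolding minimal_at_def by blast
  then show "c \<in> OK d - {(0, 0)}" using c by (auto simp flip: emb1_eq_0_iff)
  fix x assume "x \<in> OK d - {(0, 0)}"
  then have "qmul d u x \<in> OK d - {(0, 0)}" using qunits_mult_nonzero[OF u] by blast
  then show "T a (qmul d u c) \<le> T a (qmul d u x)" using min unfolding minimal_at_def by blast
qed

lemma form_rel_emb:
  "form_rel d a b \<longleftrightarrow> (\<exists>u \<in> qunits d. \<exists>l::rat. l > 0 \<and> e1 b = real_of_rat l * e1 a * (e1 u)^2)"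
  unfolding form_rel_def by (simp add: emb1_inject[symmetric] power2_eq_square mult.assoc)

lemma form_rel_refl: "form_rel d a a"
  unfolding form_rel_emb using one_qunits by (auto intro!: bexI[of _ "(1, 0)"] exI[of _ 1])

lemma form_rel_sym:
  assumes "form_rel d a b"
  shows "form_rel d b a"
proof -
  obtain u l where u: "u \<in> qunits d" "l > 0" "e1 b = real_of_rat l * e1 a * (e1 u)^2"
    using assms unfolding form_rel_emb by blast
  obtain v where v: "v \<in> qunits d" "e1 u * e1 v = 1" using qunits_inverse[OF u(1)] by blast
  have "e1 a = real_of_rat (1 / l) * e1 b * (e1 v)^2"
    using u(2,3) v(2) by (simp add: of_rat_divide field_simps power2_eq_square)
  then show ?thesis unfolding form_rel_emb using v(1) u(2) by (auto intro!: exI[of _ "1 / l"])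
qed

lemma form_rel_trans:
  assumes "form_rel d a b" "form_rel d b c"
  shows "form_rel d a c"
proof -
  obtain u l where u: "u \<in> qunits d" "l > 0" "e1 b = real_of_rat l * e1 a * (e1 u)^2"
    using assms(1) unfolding form_rel_emb by blast
  obtain w l' where w: "w \<in> qunits d" "l' > 0" "e1 c = real_of_rat l' * e1 b * (e1 w)^2"
    using assms(2) unfolding form_rel_emb by blast
  have "e1 c = real_of_rat (l' * l) * e1 a * (e1 (qmul d u w))^2"
    using u(3) w(3) by (simp add: of_rat_mult power_mult_distrib)
  moreover have "qmul d u w \<in> qunits d" "l' * l > 0" using qunits_mult u w by auto
  ultimately show ?thesis unfolding form_rel_emb by blast
qed

subsection \<open>Cones spanned by forms with a common minimal vector\<close>

definition slope :: "qelt \<Rightarrow> real" where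
  "slope a = e2 a / e1 a"

lemma slope_le_iff: "totpos d a \<Longrightarrow> totpos d b \<Longrightarrow> slope a \<le> slope b \<longleftrightarrow> e1 b * e2 a \<le> e1 a * e2 b"
  unfolding slope_def totpos_iff by (simp add: divide_le_eq le_divide_eq mult.commute)

lemma slope_less_iff: "totpos d a \<Longrightarrow> totpos d b \<Longrightarrow> slope a < slope b \<longleftrightarrow> e1 b * e2 a < e1 a * e2 b"
  unfolding slope_def totpos_iff by (simp add: divide_less_eq less_divide_eq mult.commute)

lemma slope_scale: "l \<noteq> 0 \<Longrightarrow> slope (qscale l a) = slope a"
  unfolding slope_def by simp

lemma slope_mult_square: "slope (qmul d a (qmul d u u)) = slope a * (e2 u / e1 u)^2"
  unfolding slope_def by (simp add: power2_eq_square)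

lemma T_lin: "T (qadd (qscale p F) (qscale q G)) x = real_of_rat p * T F x + real_of_rat q * T G x"
  by (simp add: algebra_simps)

lemma det_emb: "e1 F * e2 G - e2 F * e1 G = -2 * sd * real_of_rat (fst F * snd G - snd F * fst G)"
  unfolding emb1_def emb2_def by (simp add: of_rat_diff of_rat_mult algebra_simps)

lemma minimal_at_cone:
  assumes "minimal_at F c" "minimal_at G c" "\<alpha> \<ge> 0" "\<beta> \<ge> 0"
  shows "minimal_at (qadd (qscale \<alpha> F) (qscale \<beta> G)) c"
  unfolding minimal_at_def T_lin
proof (intro conjI ballI)
  show "c \<in> OK d - {(0, 0)}" using assms(1) unfolding minimal_at_def by blast
  fix x assume "x \<in> OK d - {(0, 0)}"
  then have "T F c \<le> T F x" "T G c \<le> T G x" using assms(1,2) unfolding minimal_at_def by blast+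
  then show "real_of_rat \<alpha> * T F c + real_of_rat \<beta> * T G c \<le> real_of_rat \<alpha> * T F x + real_of_rat \<beta> * T G x"
    using assms(3,4) by (meson add_mono mult_left_mono zero_le_of_rat_iff)
qed

lemma cone_decomposition:
  assumes F: "totpos d F" and G: "totpos d G" and a: "totpos d a"
    and FG: "slope F < slope G" and Fa: "slope F \<le> slope a" and aG: "slope a \<le> slope G"
  obtains \<alpha> \<beta> :: rat where "\<alpha> \<ge> 0" "\<beta> \<ge> 0" "a = qadd (qscale \<alpha> F) (qscale \<beta> G)"
proof -
  obtain a0 a1 f0 f1 g0 g1 where afg: "a = (a0, a1)" "F = (f0, f1)" "G = (g0, g1)"
    by (metis surj_pair)
  define D where "D = f0 * g1 - f1 * g0"
  define \<alpha> where "\<alpha> = (a0 * g1 - a1 * g0) / D"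
  define \<beta> where "\<beta> = (f0 * a1 - f1 * a0) / D"
  have det: "e1 F * e2 G - e2 F * e1 G > 0"
    using FG F G by (simp add: slope_less_iff algebra_simps)
  then have "D \<noteq> 0" using det_emb[of F G] afg unfolding D_def by auto
  moreover have "(a0 * g1 - a1 * g0) * f0 + (f0 * a1 - f1 * a0) * g0 = a0 * D"
    "(a0 * g1 - a1 * g0) * f1 + (f0 * a1 - f1 * a0) * g1 = a1 * D"
    unfolding D_def by algebra+
  ultimately have dec: "a = qadd (qscale \<alpha> F) (qscale \<beta> G)"
    unfolding qadd_def qscale_def \<alpha>_def \<beta>_def afg by (simp add: divide_simps)
  then have "e1 a = real_of_rat \<alpha> * e1 F + real_of_rat \<beta> * e1 G"
    "e2 a = real_of_rat \<alpha> * e2 F + real_of_rat \<beta> * e2 G"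
    by (metis emb1_add emb1_scale, metis emb2_add emb2_scale)
  then have "real_of_rat \<alpha> * (e1 F * e2 G - e2 F * e1 G) = e1 a * e2 G - e2 a * e1 G"
    "real_of_rat \<beta> * (e1 F * e2 G - e2 F * e1 G) = e1 F * e2 a - e2 F * e1 a"
    by (simp_all add: algebra_simps)
  moreover have "e1 a * e2 G - e2 a * e1 G \<ge> 0" "e1 F * e2 a - e2 F * e1 a \<ge> 0"
    using Fa aG F G a by (simp_all add: slope_le_iff algebra_simps)
  ultimately have "real_of_rat \<alpha> \<ge> 0" "real_of_rat \<beta> \<ge> 0"
    using det by (metis zero_le_mult_iff not_le)+
  then show ?thesis using that dec by simp
qed

lemma minvecs_cone:
  assumes a: "totpos d a" and dec: "a = qadd (qscale \<alpha> F) (qscale \<beta> G)"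
    and \<alpha>: "\<alpha> > 0" and \<beta>: "\<beta> > 0" and cF: "minimal_at F c" and cG: "minimal_at G c"
    and v: "v \<in> minvecs d a"
  shows "T F v = T F c" and "T G v = T G c"
proof -
  have Ta: "T a x = real_of_rat \<alpha> * T F x + real_of_rat \<beta> * T G x" for x
    unfolding dec T_lin ..
  have ca: "minimal_at a c" unfolding dec using minimal_at_cone cF cG \<alpha> \<beta> by simp
  then have c: "c \<in> OK d - {(0, 0)}" unfolding minimal_at_def by blast
  have "T a v = T a c" "v \<in> OK d" using v mu_eqI[OF ca] unfolding minvecs_def tf_emb by auto
  moreover have "v \<noteq> (0, 0)" using calculation(1) T_pos[OF a, of c] c by auto
  ultimately have "T F c \<le> T F v" "T G c \<le> T G v"
    using cF cG unfolding minimal_at_def by auto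
  then have "real_of_rat \<alpha> * (T F v - T F c) \<ge> 0" "real_of_rat \<beta> * (T G v - T G c) \<ge> 0"
    using \<alpha> \<beta> by simp_all
  moreover have "real_of_rat \<alpha> * (T F v - T F c) + real_of_rat \<beta> * (T G v - T G c) = 0"
    using \<open>T a v = T a c\<close> unfolding Ta by (simp add: algebra_simps)
  ultimately have "real_of_rat \<alpha> * (T F v - T F c) = 0" "real_of_rat \<beta> * (T G v - T G c) = 0"
    by linarith+
  then show "T F v = T F c" "T G v = T G c" using \<alpha> \<beta> by simp_all
qed

text \<open>Trading half of the weight on \<open>G\<close> for weight on \<open>F\<close>, in the ratio of \<open>T G c\<close> to \<open>T F c\<close>,
  changes \<open>a\<close> but, by the previous lemma, none of its values at minimal vectors.\<close>
lemma cone_interior_not_perfect: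
  assumes F: "totpos d F" and G: "totpos d G" and FG: "slope F < slope G"
    and cF: "minimal_at F c" and cG: "minimal_at G c"
    and a: "a = qadd (qscale \<alpha> F) (qscale \<beta> G)" and \<alpha>: "\<alpha> > 0" and \<beta>: "\<beta> > 0"
  shows "\<not> perfect d a"
proof
  assume perf: "perfect d a"
  then have apos: "totpos d a" unfolding perfect_def by blast
  have c: "c \<in> OK d - {(0, 0)}" using cF unfolding minimal_at_def by blast
  have TFc: "T F c > 0" and TGc: "T G c > 0" using T_pos F G c by auto
  define t where "t = \<beta> * tf d G c / (2 * tf d F c)"
  have t: "real_of_rat t * T F c = real_of_rat (\<beta> / 2) * T G c"
  proof -
    have cancel: "y / (2 * z) * z = y / 2" if "z \<noteq> 0" for y z :: real using that by simp
    have "real_of_rat t = real_of_rat \<beta> * T G c / (2 * T F c)"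
      unfolding t_def by (simp add: of_rat_divide of_rat_mult tf_emb)
    then have "real_of_rat t * T F c = real_of_rat \<beta> * T G c / (2 * T F c) * T F c" by simp
    also have "\<dots> = real_of_rat \<beta> * T G c / 2" by (rule cancel) (use TFc in simp)
    finally show ?thesis by (simp add: of_rat_divide)
  qed
  have "real_of_rat t * T F c > 0" using t TGc \<beta> by simp
  then have tpos: "t > 0" using TFc by (simp add: zero_less_mult_iff)
  define b where "b = qadd (qscale (\<alpha> + t) F) (qscale (\<beta> / 2) G)"
  have Tb: "T b x = real_of_rat t * (T F x - T F c) - real_of_rat (\<beta> / 2) * (T G x - T G c) + T a x" for x
    using t unfolding b_def T_lin a by (simp add: of_rat_add of_rat_divide algebra_simps)
  have "totpos d b"
    unfolding b_def using F G \<alpha> \<beta> tpos by (simp add: totpos_iff of_rat_add add_pos_pos)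
  moreover have "real_of_rat (tf d b v) = mu d a" if v: "v \<in> minvecs d a" for v
    using minvecs_cone[OF apos a \<alpha> \<beta> cF cG v] v unfolding minvecs_def by (simp add: tf_emb Tb)
  ultimately have "b = a" using perf unfolding perfect_def by blast
  then have "real_of_rat (\<alpha> + t) * e1 F + real_of_rat (\<beta> / 2) * e1 G
      = real_of_rat \<alpha> * e1 F + real_of_rat \<beta> * e1 G"
    unfolding a b_def by (metis emb1_add emb1_scale)
  then have "e1 (qscale t F) = e1 (qscale (\<beta> / 2) G)"
    by (simp add: of_rat_add of_rat_divide algebra_simps)
  then have "qscale t F = qscale (\<beta> / 2) G" by (simp only: emb1_inject)
  then have "slope F = slope G" using slope_scale[of t F] slope_scale[of "\<beta> / 2" G] tpos \<beta> by simp
  then show False using FG by simp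
qed

lemma cone_minimal_and_perfect:
  assumes F: "totpos d F" and G: "totpos d G" and FG: "slope F < slope G"
    and cF: "minimal_at F c" and cG: "minimal_at G c"
    and a: "totpos d a" and Fa: "slope F \<le> slope a" and aG: "slope a \<le> slope G"
  shows "minimal_at a c"
    and "perfect d a \<Longrightarrow> \<exists>l > 0. a = qscale l F \<or> a = qscale l G"
proof -
  obtain \<alpha> \<beta> where \<alpha>: "\<alpha> \<ge> 0" and \<beta>: "\<beta> \<ge> 0" and dec: "a = qadd (qscale \<alpha> F) (qscale \<beta> G)"
    using cone_decomposition[OF F G a FG Fa aG] .
  have Ta: "T a x = real_of_rat \<alpha> * T F x + real_of_rat \<beta> * T G x" for x
    unfolding dec T_lin ..
  show "minimal_at a c" unfolding dec using minimal_at_cone cF cG \<alpha> \<beta> by simp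
  assume perf: "perfect d a"
  consider "\<alpha> = 0" | "\<beta> = 0" | "\<alpha> > 0" "\<beta> > 0" using \<alpha> \<beta> by linarith
  then show "\<exists>l > 0. a = qscale l F \<or> a = qscale l G"
  proof cases
    case 1
    then have "a = qscale \<beta> G" using dec by (simp add: qadd_def qscale_def)
    moreover from this have "\<beta> > 0" using a \<beta> by (auto simp: totpos_iff less_le)
    ultimately show ?thesis by blast
  next
    case 2
    then have "a = qscale \<alpha> F" using dec by (simp add: qadd_def qscale_def)
    moreover from this have "\<alpha> > 0" using a \<alpha> by (auto simp: totpos_iff less_le)
    ultimately show ?thesis by blast
  next
    case 3
    then show ?thesis using cone_interior_not_perfect[OF F G FG cF cG dec] perf by blast
  qed
qed

end

section \<open>Two perfect forms exchanged by a unit\<close>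

text \<open>The slope conditions make the slopes of \<open>A\<close>, \<open>B\<close> and \<open>A \<epsilon>'\<^sup>2\<close> increase, so that the forms
  \<open>A u\<^sup>2\<close> and \<open>B u\<^sup>2\<close>, for \<open>u\<close> a power of \<open>\<epsilon>\<close>, cover all slopes in consecutive cones.\<close>
locale perfect_pair = real_quadratic_field +
  fixes \<delta> \<epsilon> A :: qelt
  assumes eps_unit: "\<epsilon> \<in> qunits d"
    and eps_norm: "e1 \<epsilon> * e2 \<epsilon> = 1"
    and eps_gt_1: "e1 \<epsilon> > 1"
    and A_totpos: "totpos d A"
    and minimal_A_one: "minimal_at A (1, 0)"
    and minimal_A_delta: "minimal_at A \<delta>"
    and eps_conj_delta: "qmul d \<epsilon> (qconj \<delta>) = \<delta> \<or> qmul d \<epsilon> (qconj \<delta>) = qneg \<delta>"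
    and slope_A_gt_1: "1 < slope A"
    and slope_A_less: "slope A < (e1 \<epsilon>)^2"
begin

abbreviation "L \<equiv> e1 \<epsilon>"

definition B :: qelt where
  "B = qmul d (qconj A) (qmul d (qconj \<epsilon>) (qconj \<epsilon>))"

definition eps_pow :: "int \<Rightarrow> qelt" where
  "eps_pow k = (if 0 \<le> k then qpow d \<epsilon> (nat k) else qpow d (qconj \<epsilon>) (nat (- k)))"

lemma L_pos: "L > 0"
  using eps_gt_1 by simp

lemma emb2_eps: "e2 \<epsilon> = inverse L"
  using inverse_unique[OF eps_norm] by simp

lemma eps_nonzero: "\<epsilon> \<noteq> (0, 0)"
  using eps_unit qunits_nonzero by blast

lemma delta_OK: "\<delta> \<in> OK d" and delta_nonzero: "\<delta> \<noteq> (0, 0)"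
  using minimal_A_delta unfolding minimal_at_def by auto

lemma T_A_delta: "T A \<delta> = T A (1, 0)"
proof -
  have "(1, 0) \<in> OK d - {(0, 0)}" "\<delta> \<in> OK d - {(0, 0)}"
    using OK_one delta_OK delta_nonzero by simp_all
  then have "T A (1, 0) \<le> T A \<delta>" "T A \<delta> \<le> T A (1, 0)"
    using minimal_A_one minimal_A_delta unfolding minimal_at_def by blast+
  then show ?thesis by linarith
qed

lemma emb_delta_square: "(e1 \<delta>)^2 = L^2 * (e2 \<delta>)^2"
proof -
  have "e1 (qmul d \<epsilon> (qconj \<delta>)) = e1 \<delta> \<or> e1 (qmul d \<epsilon> (qconj \<delta>)) = - e1 \<delta>"
    using eps_conj_delta by (metis emb1_neg)
  then have "L * e2 \<delta> = e1 \<delta> \<or> L * e2 \<delta> = - e1 \<delta>" by simp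
  then have "(L * e2 \<delta>)^2 = (e1 \<delta>)^2" by auto
  then show ?thesis by (simp add: power_mult_distrib)
qed

lemma emb_delta_square_inverse: "(inverse L)^2 * (e1 \<delta>)^2 = (e2 \<delta>)^2"
proof -
  have "(inverse L)^2 * (e1 \<delta>)^2 = (inverse L * L)^2 * (e2 \<delta>)^2"
    unfolding emb_delta_square power_mult_distrib by (simp only: mult.assoc)
  also have "inverse L * L = 1" using L_pos by (intro left_inverse) linarith
  finally show ?thesis by simp
qed

lemma delta_emb_square_neq: "(e1 \<delta>)^2 \<noteq> (e2 \<delta>)^2"
proof
  assume "(e1 \<delta>)^2 = (e2 \<delta>)^2"
  then have "(L^2 - 1) * (e2 \<delta>)^2 = 0" using emb_delta_square by (simp add: algebra_simps)
  moreover have "L^2 - 1 > 0" using eps_gt_1 by (simp add: one_less_power)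
  moreover have "(e2 \<delta>)^2 > 0" using delta_nonzero by simp
  ultimately show False using mult_pos_pos[of "L^2 - 1" "(e2 \<delta>)^2"] by linarith
qed

lemma emb_B: "e1 B = e2 A / L^2" "e2 B = e1 A * L^2"
  unfolding B_def by (simp_all add: emb2_eps power2_eq_square field_simps)

lemma B_totpos: "totpos d B"
  using A_totpos L_pos by (auto simp: totpos_iff emb_B intro!: divide_pos_pos mult_pos_pos)

lemma slope_B: "slope B = L^4 / slope A"
  using A_totpos L_pos unfolding slope_def emb_B totpos_iff by (simp add: field_simps)

lemma T_B: "T B x = T A (qmul d \<epsilon> (qconj x))"
  using L_pos by (simp add: emb_B emb2_eps power_mult_distrib field_simps)

lemma T_B_eps: "T B \<epsilon> = T A (1, 0)"
  using eps_norm by (simp add: T_B mult.commute)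

lemma minimal_B_eps: "minimal_at B \<epsilon>"
  unfolding minimal_at_def
proof (intro conjI ballI)
  show "\<epsilon> \<in> OK d - {(0, 0)}" using eps_unit qunits_OK qunits_nonzero by blast
  fix x assume x: "x \<in> OK d - {(0, 0)}"
  then have "qconj x \<in> OK d - {(0, 0)}" using OK_conj by (auto simp flip: emb1_eq_0_iff)
  then have "qmul d \<epsilon> (qconj x) \<in> OK d - {(0, 0)}" using qunits_mult_nonzero eps_unit by blast
  then have "T A (1, 0) \<le> T A (qmul d \<epsilon> (qconj x))"
    using minimal_A_one unfolding minimal_at_def by blast
  then show "T B \<epsilon> \<le> T B x" unfolding T_B_eps unfolding T_B .
qed

lemma T_B_delta: "T B \<delta> = T B \<epsilon>"
proof -
  have "T A (qmul d \<epsilon> (qconj \<delta>)) = T A \<delta>"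
    using eps_conj_delta by (elim disjE) (simp_all only: T_neg)
  then show ?thesis using T_A_delta T_B_eps unfolding T_B by linarith
qed

lemma minimal_B_delta: "minimal_at B \<delta>"
  using minimal_B_eps T_B_delta delta_OK delta_nonzero unfolding minimal_at_def by auto

lemma perfect_A: "perfect d A"
  unfolding perfect_def
proof (intro conjI allI impI)
  show "totpos d A" by (rule A_totpos)
  fix b assume b: "totpos d b \<and> (\<forall>v \<in> minvecs d A. real_of_rat (tf d b v) = mu d A)"
  have "(1, 0) \<in> minvecs d A" "\<delta> \<in> minvecs d A"
    using minimal_A_one minimal_A_delta by (simp_all add: minimal_at_minvecs)
  then have "T b (1, 0) = T A (1, 0)" "T b \<delta> = T A \<delta>"
    using b mu_eqI[OF minimal_A_one] T_A_delta by (auto simp: tf_emb)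
  then have "e1 b + e2 b = e1 A + e2 A"
    "e1 b * (e1 \<delta>)^2 + e2 b * (e2 \<delta>)^2 = e1 A * (e1 \<delta>)^2 + e2 A * (e2 \<delta>)^2"
    by simp_all
  then have "(e1 b - e1 A) * ((e1 \<delta>)^2 - (e2 \<delta>)^2) = 0" by algebra
  then have "e1 b = e1 A" using delta_emb_square_neq by simp
  then show "b = A" by (simp add: emb1_inject)
qed

lemma perfect_B: "perfect d B"
  unfolding perfect_def
proof (intro conjI allI impI)
  show "totpos d B" by (rule B_totpos)
  fix b assume b: "totpos d b \<and> (\<forall>v \<in> minvecs d B. real_of_rat (tf d b v) = mu d B)"
  have "\<epsilon> \<in> minvecs d B" "\<delta> \<in> minvecs d B"
    using minimal_B_eps minimal_B_delta by (simp_all add: minimal_at_minvecs)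
  then have "T b \<epsilon> = T B \<epsilon>" "T b \<delta> = T B \<delta>"
    using b mu_eqI[OF minimal_B_eps] T_B_delta by (auto simp: tf_emb)
  then have "(e1 b - e1 B) * L^2 + (e2 b - e2 B) * (inverse L)^2 = 0"
    "(e1 b - e1 B) * (e1 \<delta>)^2 + (e2 b - e2 B) * (e2 \<delta>)^2 = 0"
    by (simp_all add: emb2_eps algebra_simps)
  then have "(e1 b - e1 B) * (L^2 * (e2 \<delta>)^2 - (inverse L)^2 * (e1 \<delta>)^2) = 0"
    by algebra
  moreover have "L^2 * (e2 \<delta>)^2 = (e1 \<delta>)^2" using emb_delta_square by simp
  moreover note emb_delta_square_inverse
  ultimately have "(e1 b - e1 B) * ((e1 \<delta>)^2 - (e2 \<delta>)^2) = 0" by simp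
  then have "e1 b = e1 B" using delta_emb_square_neq by simp
  then show "b = B" by (simp add: emb1_inject)
qed

lemma shifted_pair:
  assumes u: "u \<in> qunits d" and v: "v \<in> qunits d" and uv: "e1 u * e1 v = 1" "e2 u * e2 v = 1"
  defines "F \<equiv> qmul d A (qmul d u u)" and "G \<equiv> qmul d B (qmul d u u)"
    and "H \<equiv> qmul d A (qmul d (qmul d u (qconj \<epsilon>)) (qmul d u (qconj \<epsilon>)))"
  shows "totpos d F" "totpos d G" "totpos d H"
    and "slope F < slope G" "slope G < slope H" "slope H = slope F * L^4"
    and "minimal_at F (qmul d v \<delta>)" "minimal_at G (qmul d v \<delta>)"
    and "minimal_at G (qmul d v \<epsilon>)" "minimal_at H (qmul d v \<epsilon>)"
proof -
  have u0: "e1 u \<noteq> 0" "e2 u \<noteq> 0" using u qunits_nonzero by auto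
  have "qmul d u (qconj \<epsilon>) \<noteq> (0, 0)"
    using qunits_nonzero qunits_mult qunits_conj u eps_unit by blast
  then show "totpos d F" "totpos d G" "totpos d H"
    unfolding F_def G_def H_def using A_totpos B_totpos u0
    by (simp_all add: totpos_mult_square)
  define \<rho> where "\<rho> = (e2 u / e1 u)^2"
  have \<rho>: "\<rho> > 0" unfolding \<rho>_def using u0 by simp
  have slopes: "slope F = slope A * \<rho>" "slope G = L^4 / slope A * \<rho>" "slope H = slope A * \<rho> * L^4"
    unfolding F_def G_def H_def slope_mult_square \<rho>_def slope_B
    using L_pos by (simp_all add: emb2_eps power_mult_distrib field_simps)
  have "slope A * slope A < L^2 * L^2"
    using slope_A_less slope_A_gt_1 by (intro mult_strict_mono) auto
  then show "slope F < slope G"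
    using slope_A_gt_1 \<rho> unfolding slopes by (simp add: field_simps power4_eq_xxxx power2_eq_square)
  have "slope H = slope G * (slope A * slope A)"
    using slope_A_gt_1 unfolding slopes by (simp add: field_simps)
  moreover have "slope G > 0"
    using slope_A_gt_1 L_pos \<rho> unfolding slopes by (intro mult_pos_pos divide_pos_pos) auto
  ultimately show "slope G < slope H"
    using mult_strict_left_mono[OF less_1_mult[OF slope_A_gt_1 slope_A_gt_1], of "slope G"] by simp
  show "slope H = slope F * L^4" unfolding slopes by simp
  have vOK: "qmul d v \<delta> \<in> OK d" "qmul d v \<epsilon> \<in> OK d"
    using OK_mult qunits_OK v delta_OK eps_unit by auto
  have "e1 u * e2 \<epsilon> * (e1 v * L) = (e1 u * e1 v) * (L * e2 \<epsilon>)" by (simp only: ac_simps)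
  then have "qmul d (qmul d u (qconj \<epsilon>)) (qmul d v \<epsilon>) = (1, 0)"
    using uv eps_norm by (simp add: emb1_inject[symmetric])
  moreover have "qmul d u (qmul d v \<delta>) = \<delta>" "qmul d u (qmul d v \<epsilon>) = \<epsilon>"
    using uv by (simp_all add: emb1_inject[symmetric] mult.assoc[symmetric])
  ultimately show "minimal_at F (qmul d v \<delta>)" "minimal_at G (qmul d v \<delta>)"
    "minimal_at G (qmul d v \<epsilon>)" "minimal_at H (qmul d v \<epsilon>)"
    unfolding F_def G_def H_def
    using minimal_at_mult_square[OF _ vOK(1)] minimal_at_mult_square[OF _ vOK(2)]
      minimal_A_one minimal_A_delta minimal_B_eps minimal_B_delta u qunits_mult qunits_conj eps_unit
    by metis+
qed

lemma eps_pow_unit: "eps_pow k \<in> qunits d"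
  unfolding eps_pow_def using qunits_pow qunits_conj eps_unit by auto

lemma emb_eps_pow: "e1 (eps_pow k) = L powi k" "e2 (eps_pow k) = L powi (- k)"
  unfolding eps_pow_def power_int_def using emb2_eps by auto

lemma slope_window:
  assumes a: "totpos d a"
  obtains u v where "u \<in> qunits d" "v \<in> qunits d" "e1 u * e1 v = 1" "e2 u * e2 v = 1"
    and "slope (qmul d A (qmul d u u)) \<le> slope a" "slope a < slope (qmul d A (qmul d u u)) * L^4"
proof -
  have sA: "slope A > 0" using slope_A_gt_1 by simp
  have "slope a / slope A > 0"
    using a A_totpos unfolding slope_def totpos_iff by (auto intro!: divide_pos_pos)
  moreover have "L^4 > 1" using eps_gt_1 by (simp add: one_less_power)
  ultimately obtain k where k: "(L^4) powi k \<le> slope a / slope A"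
    "slope a / slope A < (L^4) powi k * L^4"
    using power_int_bracket by blast
  define p where "p = L powi k"
  have p: "p > 0" unfolding p_def using L_pos by simp
  define u v where "u = eps_pow (- k)" and "v = eps_pow k"
  have euv: "e1 u = inverse p" "e2 u = p" "e1 v = p" "e2 v = inverse p"
    unfolding u_def v_def p_def emb_eps_pow by (simp_all add: power_int_minus)
  have "(L^4) powi k = p^4" unfolding p_def by (simp add: power_int_power power_int_power' mult.commute)
  moreover have "(e2 u / e1 u)^2 = p^4"
    using p by (simp add: euv divide_inverse power2_eq_square power4_eq_xxxx)
  ultimately have "slope (qmul d A (qmul d u u)) = slope A * (L^4) powi k"
    unfolding slope_mult_square by simp
  then have "slope (qmul d A (qmul d u u)) \<le> slope a" "slope a < slope (qmul d A (qmul d u u)) * L^4"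
    using k sA by (simp_all add: field_simps)
  moreover have "u \<in> qunits d" "v \<in> qunits d" "e1 u * e1 v = 1" "e2 u * e2 v = 1"
    unfolding u_def v_def using eps_pow_unit p by (auto simp: euv[unfolded u_def v_def])
  ultimately show ?thesis using that by blast
qed

lemma classification:
  assumes a: "totpos d a"
  shows "\<exists>w \<in> qunits d. minimal_at a (qmul d w \<delta>) \<or> minimal_at a (qmul d w \<epsilon>)"
    and "perfect d a \<Longrightarrow> form_rel d A a \<or> form_rel d B a"
proof -
  obtain u v where uv: "u \<in> qunits d" "v \<in> qunits d" "e1 u * e1 v = 1" "e2 u * e2 v = 1"
    and window: "slope (qmul d A (qmul d u u)) \<le> slope a" "slope a < slope (qmul d A (qmul d u u)) * L^4"
    using slope_window[OF a] .
  define F G H where "F = qmul d A (qmul d u u)" and "G = qmul d B (qmul d u u)"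
    and "H = qmul d A (qmul d (qmul d u (qconj \<epsilon>)) (qmul d u (qconj \<epsilon>)))"
  note pair = shifted_pair[OF uv, folded F_def G_def H_def]
  have Fa: "slope F \<le> slope a" and aH: "slope a < slope H"
    using window pair(6) unfolding F_def by simp_all
  have main: "(minimal_at a (qmul d v \<delta>) \<or> minimal_at a (qmul d v \<epsilon>))
    \<and> (perfect d a \<longrightarrow> (\<exists>l > 0. a = qscale l F \<or> a = qscale l G \<or> a = qscale l H))"
  proof (cases "slope a \<le> slope G")
    case True
    from cone_minimal_and_perfect[OF pair(1,2,4,7,8) a Fa True] show ?thesis by blast
  next
    case False
    then have "slope G \<le> slope a" by simp
    from cone_minimal_and_perfect[OF pair(2,3,5,9,10) a this less_imp_le[OF aH]] show ?thesis by blast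
  qed
  then show "\<exists>w \<in> qunits d. minimal_at a (qmul d w \<delta>) \<or> minimal_at a (qmul d w \<epsilon>)"
    using uv by blast
  show "form_rel d A a \<or> form_rel d B a" if "perfect d a"
  proof -
    have "qmul d u (qconj \<epsilon>) \<in> qunits d" using uv qunits_mult qunits_conj eps_unit by blast
    then show ?thesis using main that uv unfolding form_rel_def F_def G_def H_def by blast
  qed
qed

lemma unit_reducible_if_delta_unit:
  assumes "\<delta> \<in> qunits d"
  shows "unit_reducible d"
  unfolding unit_reducible_def
proof (intro allI impI)
  fix a assume a: "totpos d a"
  obtain c where c: "c \<in> qunits d" "minimal_at a c"
    using classification(1)[OF a] qunits_mult assms eps_unit by blast
  have "Inf ((\<lambda>u. real_of_rat (tf d a u)) ` qunits d) = T a c"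
  proof (rule cInf_eq_minimum)
    show "T a c \<in> (\<lambda>u. real_of_rat (tf d a u)) ` qunits d"
      using c(1) by (auto simp: tf_emb)
    fix y assume "y \<in> (\<lambda>u. real_of_rat (tf d a u)) ` qunits d"
    then obtain u where "u \<in> qunits d" "y = T a u" by (auto simp: tf_emb)
    then show "T a c \<le> y" using c(2) qunits_OK qunits_nonzero unfolding minimal_at_def by auto
  qed
  then show "mu d a = Inf ((\<lambda>u. real_of_rat (tf d a u)) ` qunits d)" using mu_eqI[OF c(2)] by simp
qed

text \<open>An equivalence between \<open>A\<close> and \<open>B\<close> cannot rescale, since both have minimum \<open>T A (1, 0)\<close>;
  so the unit realising it carries the minimal vectors \<open>\<epsilon>, \<delta>\<close> of \<open>B\<close> to minimal vectors of \<open>A\<close>.\<close>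
lemma form_rel_A_B_minimal_unit:
  assumes "form_rel d A B"
  obtains u where "u \<in> qunits d" "T A (qmul d u \<epsilon>) = T A (1, 0)" "T A (qmul d u \<delta>) = T A (1, 0)"
proof -
  obtain u l where u: "u \<in> qunits d" "l > 0" "B = qscale l (qmul d A (qmul d u u))"
    using assms unfolding form_rel_def by blast
  have TB: "T B x = real_of_rat l * T A (qmul d u x)" for x
    unfolding u(3) T_scale T_mult_square ..
  obtain v where v: "v \<in> qunits d" "e1 u * e1 v = 1" "e2 u * e2 v = 1"
    using qunits_inverse[OF u(1)] .
  have pos: "T A (1, 0) > 0" using T_pos[OF A_totpos, of "(1, 0)"] by simp
  have "T B \<epsilon> \<le> T B v"
    using minimal_B_eps v(1) qunits_OK qunits_nonzero unfolding minimal_at_def by blast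
  moreover have "T B v = real_of_rat l * T A (1, 0)" using TB[of v] v by simp
  ultimately have "1 * T A (1, 0) \<le> real_of_rat l * T A (1, 0)" using T_B_eps by simp
  then have l1: "1 \<le> real_of_rat l" using pos by (simp only: mult_le_cancel_right_pos)
  have ueps: "qmul d u \<epsilon> \<in> OK d - {(0, 0)}"
    using qunits_mult_nonzero[OF u(1)] eps_unit qunits_OK eps_nonzero by blast
  then have "T A (1, 0) \<le> T A (qmul d u \<epsilon>)" using minimal_A_one unfolding minimal_at_def by blast
  moreover have Tue: "real_of_rat l * T A (qmul d u \<epsilon>) = T A (1, 0)" using TB[of \<epsilon>] T_B_eps by simp
  moreover have "T A (qmul d u \<epsilon>) \<le> real_of_rat l * T A (qmul d u \<epsilon>)"
    using l1 pos \<open>T A (1, 0) \<le> T A (qmul d u \<epsilon>)\<close> by (subst mult_le_cancel_right1) auto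
  ultimately have "T A (qmul d u \<epsilon>) \<le> T A (1, 0)" by linarith
  then have "T A (qmul d u \<epsilon>) = T A (1, 0)" using \<open>T A (1, 0) \<le> T A (qmul d u \<epsilon>)\<close> by linarith
  moreover from this have "real_of_rat l = 1" using Tue pos by simp
  then have "T A (qmul d u \<delta>) = T A (1, 0)" using TB[of \<delta>] T_B_delta T_B_eps by simp
  ultimately show ?thesis using that u(1) by blast
qed

text \<open>If the only minimal units of \<open>A\<close> are \<open>\<pm>1\<close>, the unit of the previous lemma is \<open>\<pm>\<epsilon>\<^sup>-\<^sup>1\<close>, which
  maps \<open>\<delta>\<close> to a vector with the values of the conjugate \<open>\<delta>'\<close>.\<close>
lemma not_form_rel_A_B:
  assumes triv: "\<And>x. x \<in> qunits d \<Longrightarrow> T A x = T A (1, 0) \<Longrightarrow> x = (1, 0) \<or> x = (-1, 0)"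
    and conj: "T A (qconj \<delta>) \<noteq> T A (1, 0)"
  shows "\<not> form_rel d A B"
proof
  assume "form_rel d A B"
  then obtain u where u: "u \<in> qunits d" "T A (qmul d u \<epsilon>) = T A (1, 0)" "T A (qmul d u \<delta>) = T A (1, 0)"
    by (rule form_rel_A_B_minimal_unit)
  have "qmul d u \<epsilon> = (1, 0) \<or> qmul d u \<epsilon> = (-1, 0)"
    using triv u(1,2) qunits_mult eps_unit by blast
  moreover have "e1 (-1, 0) = -1" unfolding emb1_def by simp
  ultimately have "e1 (qmul d u \<epsilon>) = 1 \<or> e1 (qmul d u \<epsilon>) = -1" by (metis emb1_one)
  then have "e1 u * L = 1 \<or> e1 u * L = -1" by simp
  then have "L^2 * (e1 u)^2 = 1" by (auto simp flip: power_mult_distrib simp: mult.commute)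
  then have "inverse (L^2) = (e1 u)^2" by (rule inverse_unique)
  then have e1u: "(e1 u)^2 = (inverse L)^2" by (simp add: power_inverse)
  have "(e1 u * e2 u)^2 = 1" using qunits_emb_norm[OF u(1)] by auto
  then have e2u: "(e2 u)^2 = L^2"
    using e1u L_pos by (simp add: power_mult_distrib field_simps)
  have "T A (qmul d u \<delta>) = e1 A * ((e1 u)^2 * (e1 \<delta>)^2) + e2 A * ((e2 u)^2 * (e2 \<delta>)^2)"
    by (simp add: power_mult_distrib)
  also have "\<dots> = T A (qconj \<delta>)"
    unfolding e1u e2u emb_delta_square_inverse emb_delta_square[symmetric] by simp
  finally show False using u(3) conj by simp
qed

lemma nK_eq_2:
  assumes "\<And>x. x \<in> qunits d \<Longrightarrow> T A x = T A (1, 0) \<Longrightarrow> x = (1, 0) \<or> x = (-1, 0)"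
    and "T A (qconj \<delta>) \<noteq> T A (1, 0)"
  shows "nK d = 2"
proof -
  define R where "R = {(a, b). perfect d a \<and> perfect d b \<and> form_rel d a b}"
  have R: "R `` {a} = {b. perfect d b \<and> form_rel d a b}" if "perfect d a" for a
    using that unfolding R_def by auto
  have same_class: "R `` {a} = R `` {c}" if "perfect d a" "perfect d c" "form_rel d c a" for a c
  proof -
    have "form_rel d a b \<longleftrightarrow> form_rel d c b" for b
      using form_rel_trans[OF that(3), of b] form_rel_trans[OF form_rel_sym[OF that(3)], of b] by blast
    then show ?thesis unfolding R[OF that(1)] R[OF that(2)] by blast
  qed
  have "{a. perfect d a} // R = {R `` {A}, R `` {B}}"
  proof
    show "{a. perfect d a} // R \<subseteq> {R `` {A}, R `` {B}}"
    proof
      fix X assume "X \<in> {a. perfect d a} // R"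
      then obtain a where a: "perfect d a" "X = R `` {a}" unfolding quotient_def by blast
      then have "form_rel d A a \<or> form_rel d B a"
        using classification(2) unfolding perfect_def by blast
      then show "X \<in> {R `` {A}, R `` {B}}"
        using same_class[OF a(1) perfect_A] same_class[OF a(1) perfect_B] a(2) by blast
    qed
    show "{R `` {A}, R `` {B}} \<subseteq> {a. perfect d a} // R"
      using perfect_A perfect_B unfolding quotient_def by blast
  qed
  moreover have "B \<in> R `` {B}" "B \<notin> R `` {A}"
    using R perfect_A perfect_B form_rel_refl not_form_rel_A_B[OF assms] by auto
  then have "R `` {A} \<noteq> R `` {B}" by blast
  ultimately show ?thesis unfolding nK_def R_def[symmetric] by simp
qed

end

section \<open>The form attached to an element of large norm\<close>

lemma rd_slope_bound:
  fixes P Q \<rho> :: real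
  assumes "\<rho> > 0" and "(P * Q)^2 = \<rho>^2" and "2 * \<rho>^2 \<le> P^2"
  shows "P^2 - 1 < (1 - Q^2) * (P^2 / \<rho>)^2"
proof -
  have "0 < 2 * \<rho>^2" using assms(1) by simp
  then have P2: "P^2 > 0" using assms(3) by linarith
  have "Q^2 = \<rho>^2 / P^2" using assms(2) P2 by (simp add: power_mult_distrib field_simps)
  then have "(1 - Q^2) * (P^2 / \<rho>)^2 = (P^2)^2 / \<rho>^2 - P^2"
    using P2 assms(1) by (simp add: field_simps power2_eq_square)
  moreover have "2 * P^2 \<le> (P^2)^2 / \<rho>^2"
    using mult_left_mono[OF assms(3), of "P^2"] P2 assms(1) by (simp add: field_simps power2_eq_square)
  ultimately show ?thesis by linarith
qed

text \<open>The form \<open>\<surd>d (1 - \<delta>'\<^sup>2)\<close>: its trace form takes the value \<open>\<surd>d (\<delta>\<^sup>2 - \<delta>'\<^sup>2)\<close> both at \<open>1\<close> and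
  at \<open>\<delta>\<close>.\<close>
definition rd_form :: "int \<Rightarrow> qelt \<Rightarrow> qelt" where
  "rd_form d \<delta> = qmul d (0, 1) (qadd (1, 0) (qneg (qmul d (qconj \<delta>) (qconj \<delta>))))"

locale rd_delta = real_quadratic_field +
  fixes \<delta> :: qelt and n :: int
  assumes delta_OK: "\<delta> \<in> OK d"
    and norm_delta: "qnorm d \<delta> = of_int n"
    and n_nonzero: "n \<noteq> 0"
    and delta_large: "2 * (of_int n)^2 \<le> (e1 \<delta>)^2"
    and eps_trace: "qtr (qscale (1 / of_int \<bar>n\<bar>) (qmul d \<delta> \<delta>)) \<in> \<int>"
    and minimal_rd_form: "minimal_at (rd_form d \<delta>) (1, 0)"
begin

abbreviation "A \<equiv> rd_form d \<delta>"

definition eps :: qelt where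
  "eps = qscale (1 / of_int \<bar>n\<bar>) (qmul d \<delta> \<delta>)"

abbreviation "P \<equiv> e1 \<delta>"
abbreviation "Q \<equiv> e2 \<delta>"
abbreviation "\<rho> \<equiv> real_of_int \<bar>n\<bar>"

lemma rho_ge_1: "\<rho> \<ge> 1"
  using n_nonzero by linarith

lemma delta_emb_norm: "P * Q = real_of_int n"
  using qnorm_emb[of \<delta>] norm_delta by simp

lemma P_square_ge_2: "P^2 \<ge> 2"
proof -
  have "1 * 1 \<le> \<rho> * \<rho>" using rho_ge_1 by (intro mult_mono) auto
  then show ?thesis using delta_large by (simp add: power2_eq_square)
qed

lemma Q_square: "Q^2 = \<rho>^2 / P^2"
proof -
  have "P^2 * Q^2 = \<rho>^2" using delta_emb_norm by (simp flip: power_mult_distrib)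
  moreover have "P^2 \<noteq> 0" using P_square_ge_2 by linarith
  ultimately show ?thesis by (metis eq_divide_imp mult.commute)
qed

lemma Q_square_le: "Q^2 \<le> 1 / 2"
proof -
  have "0 < P^2 * (2 * \<rho>^2)" using P_square_ge_2 rho_ge_1 by (intro mult_pos_pos) auto
  then have "\<rho>^2 / P^2 \<le> \<rho>^2 / (2 * \<rho>^2)"
    using delta_large by (intro divide_left_mono) auto
  then show ?thesis using Q_square rho_ge_1 by simp
qed

lemma Q_square_pos: "Q^2 > 0"
  unfolding Q_square using rho_ge_1 P_square_ge_2 by (intro divide_pos_pos) auto

lemma emb_rd_form: "e1 A = sd * (1 - Q^2)" "e2 A = sd * (P^2 - 1)"
  unfolding rd_form_def by (simp_all add: power2_eq_square algebra_simps)

lemma emb_eps: "e1 eps = P^2 / \<rho>" "e2 eps = Q^2 / \<rho>"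
proof -
  have "real_of_rat (1 / of_int \<bar>n\<bar>) = 1 / \<rho>"
    by (simp only: of_rat_divide of_rat_1 of_rat_of_int_eq)
  then show "e1 eps = P^2 / \<rho>" "e2 eps = Q^2 / \<rho>"
    unfolding eps_def emb1_scale emb2_scale emb1_mult emb2_mult by (simp_all add: power2_eq_square)
qed

lemma T_rd_form_one: "T A (1, 0) = sd * (P^2 - Q^2)"
  unfolding emb_rd_form by (simp add: algebra_simps)

lemma eps_norm: "e1 eps * e2 eps = 1"
proof -
  have "e1 eps * e2 eps = (P * Q)^2 / \<rho>^2"
    unfolding emb_eps by (simp add: power_mult_distrib power2_eq_square)
  then show ?thesis using delta_emb_norm rho_ge_1 by simp
qed

lemma eps_unit: "eps \<in> qunits d"
proof -
  have "qnorm d eps = 1" using qnorm_emb[of eps] eps_norm by (metis of_rat_1 of_rat_eq_iff)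
  then show ?thesis using eps_trace unfolding qunits_iff_norm OK_def eps_def by simp
qed

lemma eps_conj_delta: "qmul d eps (qconj \<delta>) = \<delta> \<or> qmul d eps (qconj \<delta>) = qneg \<delta>"
proof -
  have "e1 (qmul d eps (qconj \<delta>)) = P * (P * Q) / \<rho>"
    by (simp add: emb_eps power2_eq_square)
  also have "\<dots> = P * (real_of_int n / \<rho>)" using delta_emb_norm by simp
  finally have "e1 (qmul d eps (qconj \<delta>)) = e1 \<delta> \<or> e1 (qmul d eps (qconj \<delta>)) = e1 (qneg \<delta>)"
    using n_nonzero by (auto simp: abs_if)
  then show ?thesis by (simp only: emb1_inject)
qed

lemma perfect_pair_rd: "perfect_pair d \<delta> eps A"
proof unfold_locales
  show "eps \<in> qunits d" "e1 eps * e2 eps = 1" by (fact eps_unit, fact eps_norm)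
  show "e1 eps > 1"
  proof -
    have "\<rho> * 1 \<le> \<rho> * \<rho>" using rho_ge_1 by (intro mult_left_mono) auto
    then have "\<rho> < 2 * \<rho>^2" using rho_ge_1 by (simp add: power2_eq_square)
    then have "\<rho> < P^2" using delta_large by simp
    then show ?thesis unfolding emb_eps using rho_ge_1 by (simp add: less_divide_eq)
  qed
  show "totpos d A" unfolding totpos_iff emb_rd_form using sqrt_d_pos Q_square_le P_square_ge_2 by simp
  show "minimal_at A (1, 0)" by (fact minimal_rd_form)
  have "T A \<delta> = T A (1, 0)" unfolding T_rd_form_one unfolding emb_rd_form by (simp add: algebra_simps)
  moreover have "\<delta> \<noteq> (0, 0)" using delta_emb_norm n_nonzero by auto
  ultimately show "minimal_at A \<delta>" using minimal_rd_form delta_OK unfolding minimal_at_def by simp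
  show "qmul d eps (qconj \<delta>) = \<delta> \<or> qmul d eps (qconj \<delta>) = qneg \<delta>" by (fact eps_conj_delta)
  have "1 - Q^2 > 0" "1 - Q^2 < P^2 - 1" using Q_square_le Q_square_pos P_square_ge_2 by linarith+
  then show "1 < slope A" unfolding slope_def emb_rd_form using sqrt_d_pos by simp
  have "P^2 - 1 < (1 - Q^2) * (P^2 / \<rho>)^2"
    by (rule rd_slope_bound) (use delta_emb_norm delta_large rho_ge_1 in simp_all)
  then show "slope A < (e1 eps)^2"
    unfolding slope_def emb_rd_form emb_eps using sqrt_d_pos \<open>1 - Q^2 > 0\<close> by (simp add: divide_less_eq mult.commute)
qed

lemma T_rd_form_conj_delta: "T A (qconj \<delta>) \<noteq> T A (1, 0)"
proof
  assume "T A (qconj \<delta>) = T A (1, 0)"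
  then have "sd * ((1 - Q^2) * Q^2 + (P^2 - 1) * P^2) = sd * (P^2 - Q^2)"
    unfolding T_rd_form_one unfolding emb_rd_form by (simp add: algebra_simps)
  moreover have "sd \<noteq> 0" using sqrt_d_pos by linarith
  ultimately have "(1 - Q^2) * Q^2 + (P^2 - 1) * P^2 = P^2 - Q^2" by (metis mult_left_cancel)
  then have "(P^2 - Q^2) * (P^2 + Q^2 - 2) = 0" by algebra
  then show False using P_square_ge_2 Q_square_pos Q_square_le by simp
qed

lemma nK_eq_2_if_minimal_units_trivial:
  assumes "\<not> unit_reducible d"
    and "\<And>x. \<bar>n\<bar> \<noteq> 1 \<Longrightarrow> x \<in> qunits d \<Longrightarrow> T A x = T A (1, 0) \<Longrightarrow> x = (1, 0) \<or> x = (-1, 0)"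
  shows "nK d = 2"
proof -
  interpret perfect_pair d \<delta> eps A by (rule perfect_pair_rd)
  have "\<delta> \<notin> qunits d" using assms(1) unit_reducible_if_delta_unit by blast
  then have "\<bar>n\<bar> \<noteq> 1" using delta_OK norm_delta unfolding qunits_iff_norm by auto
  from assms(2)[OF this] T_rd_form_conj_delta show ?thesis by (rule nK_eq_2)
qed

end

section \<open>Fields of Richaud-Degert type\<close>

locale richaud_degert = real_quadratic_field +
  fixes m r :: int
  assumes d_eq: "d = m^2 + r" and m_pos: "m > 0" and r_gt: "- m < r" and r_le: "r \<le> m"
    and r_dvd: "r dvd 4 * m"
begin

lemma r_nonzero: "r \<noteq> 0"
  using r_dvd m_pos by auto

lemma r_square_le: "2 * r^2 \<le> 2 * m^2 + r"
proof (cases "r \<ge> 0")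
  case True
  then have "r * r \<le> m * m" using r_le by (intro mult_mono) auto
  then show ?thesis using True by (simp add: power2_eq_square)
next
  case False
  then have "- r * - r \<le> (m - 1) * (m - 1)" using r_gt by (intro mult_mono) auto
  then show ?thesis using False r_gt by (simp add: power2_eq_square algebra_simps)
qed

lemma m_plus_sqrt_d_square: "real_of_int (2 * m^2 + r) \<le> (real_of_int m + sd)^2"
proof -
  have "(real_of_int m + sd)^2 = real_of_int m^2 + 2 * real_of_int m * sd + sd * sd"
    by (simp add: power2_eq_square algebra_simps)
  moreover have "0 \<le> 2 * real_of_int m * sd" using m_pos sqrt_d_pos by simp
  ultimately show ?thesis unfolding sqrt_d_square by (simp add: d_eq)
qed

lemma abs_r_dvd: "\<bar>r\<bar> dvd 4 * m^2 + 2 * r"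
proof -
  obtain k where "4 * m = r * k" using r_dvd by (elim dvdE)
  then have "4 * m^2 + 2 * r = r * (k * m + 2)" by (simp add: power2_eq_square algebra_simps)
  then show ?thesis by simp
qed

end

locale richaud_degert_23 = richaud_degert +
  assumes d_mod_4: "d mod 4 = 2 \<or> d mod 4 = 3"
begin

definition delta :: qelt where
  "delta = (of_int m, 1)"

abbreviation "A \<equiv> rd_form d delta"

lemma OK_coords:
  assumes "x \<in> OK d"
  obtains t q :: int where "x = (of_int (t + m * q), of_int q)"
proof -
  obtain X Y where x: "x = (of_int X / 2, of_int Y / 2)" and "4 dvd X^2 - d * Y^2"
    using OK_half_integer_coords[OF assms] .
  then have "(X^2 mod 4 - (d mod 4) * (Y^2 mod 4) mod 4) mod 4 = 0"
    by (metis dvd_eq_mod_eq_0 mod_diff_eq mod_mult_eq mod_mod_trivial)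
  then have "even X" "even Y" using d_mod_4 unfolding int_square_mod_4 by (auto split: if_splits)
  then obtain p q where "X = 2 * p" "Y = 2 * q" by (auto elim!: evenE)
  then have "x = (of_int ((p - m * q) + m * q), of_int q)" using x by simp
  then show ?thesis using that by blast
qed

lemma tf_A: "tf d A (of_int (t + m * q), of_int q) = of_int (4 * d * (m * t^2 + (1 - r) * t * q + m * q^2))"
proof -
  have tf: "tf d A (of_int p, of_int q) = of_int (4 * d * (m * p^2 + (1 - m^2 - d) * p * q + m * d * q^2))"
    for p
    unfolding rd_form_def tf_def qtr_def qmul_def qadd_def qneg_def qconj_def delta_def
    by (simp add: algebra_simps power2_eq_square)
  have "tf d A (of_int (t + m * q), of_int q)
      = of_int (4 * d * (m * (t + m * q)^2 + (1 - m^2 - d) * (t + m * q) * q + m * d * q^2))"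
    by (rule tf)
  also have "m * (t + m * q)^2 + (1 - m^2 - d) * (t + m * q) * q + m * d * q^2
      = m * t^2 + (1 - r) * t * q + m * q^2"
    unfolding d_eq by (simp add: algebra_simps power2_eq_square)
  finally show ?thesis .
qed

lemma tf_A_one: "tf d A (1, 0) = of_int (4 * d * m)"
  using tf_A[of 1 0] by simp

lemma minimal_A_one: "minimal_at A (1, 0)"
  unfolding minimal_at_tf
proof (intro conjI ballI)
  show "(1, 0) \<in> OK d - {(0, 0)}" using OK_one by simp
  fix x assume x: "x \<in> OK d - {(0, 0)}"
  then obtain t q where xq: "x = (of_int (t + m * q), of_int q)" using OK_coords by blast
  then have "t \<noteq> 0 \<or> q \<noteq> 0" using x by auto
  then have "m \<le> m * t^2 + (1 - r) * t * q + m * q^2"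
    using reduced_binary_form_ge m_pos r_gt r_le by simp
  then have "4 * d * m \<le> 4 * d * (m * t^2 + (1 - r) * t * q + m * q^2)"
    using d_gt_1 by (intro mult_left_mono) auto
  then show "tf d A (1, 0) \<le> tf d A x" unfolding xq tf_A tf_A_one by (simp only: of_int_le_iff)
qed

lemma is_rd_delta: "rd_delta d delta (- r)"
proof unfold_locales
  show "delta \<in> OK d" unfolding OK_def qtr_def qnorm_def delta_def by simp
  show "qnorm d delta = of_int (- r)" unfolding qnorm_def delta_def d_eq by simp
  show "- r \<noteq> 0" using r_nonzero by simp
  have "e1 delta = real_of_int m + sd" unfolding emb1_def delta_def by simp
  moreover have "real_of_int (2 * r^2) \<le> real_of_int (2 * m^2 + r)"
    using r_square_le by (simp only: of_int_le_iff)
  ultimately show "2 * (real_of_int (- r))^2 \<le> (e1 delta)^2"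
    using m_plus_sqrt_d_square by simp
  obtain k where k: "4 * m^2 + 2 * r = \<bar>r\<bar> * k" using abs_r_dvd by (elim dvdE)
  have "qtr (qscale (1 / of_int \<bar>- r\<bar>) (qmul d delta delta)) = of_int (4 * m^2 + 2 * r) / of_int \<bar>r\<bar>"
    unfolding qtr_def qscale_def qmul_def delta_def d_eq by (simp add: power2_eq_square)
  also have "\<dots> = of_int k" unfolding k using r_nonzero by simp
  finally show "qtr (qscale (1 / of_int \<bar>- r\<bar>) (qmul d delta delta)) \<in> \<int>" by simp
  show "minimal_at (rd_form d delta) (1, 0)" by (fact minimal_A_one)
qed

lemma minimal_units:
  assumes "\<bar>r\<bar> \<noteq> 1" and "x \<in> qunits d" and "T A x = T A (1, 0)"
  shows "x = (1, 0) \<or> x = (- 1, 0)"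
proof -
  obtain t q where xq: "x = (of_int (t + m * q), of_int q)" using OK_coords assms(2) qunits_OK by blast
  have "tf d A x = tf d A (1, 0)" using assms(3) unfolding tf_emb[symmetric] by simp
  then have "4 * d * (m * t^2 + (1 - r) * t * q + m * q^2) = 4 * d * m"
    unfolding xq tf_A tf_A_one by (simp only: of_int_eq_iff)
  then have "m * t^2 + (1 - r) * t * q + m * q^2 = m" using d_gt_1 by simp
  moreover have "\<bar>1 - r\<bar> \<le> m" using r_gt r_le by linarith
  ultimately have "\<bar>t\<bar> \<le> 1 \<and> \<bar>q\<bar> \<le> 1" using reduced_binary_form_eq_imp_small m_pos by blast
  then have tq: "t \<in> {-1, 0, 1}" "q \<in> {-1, 0, 1}" by auto
  have "qnorm d x = 1 \<or> qnorm d x = -1" using assms(2) unfolding qunits_iff_norm by blast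
  moreover have "qnorm d x = of_int (t^2 + 2 * m * t * q - r * q^2)"
    unfolding xq qnorm_def d_eq by (simp add: power2_eq_square algebra_simps)
  ultimately have N: "t^2 + 2 * m * t * q - r * q^2 = 1 \<or> t^2 + 2 * m * t * q - r * q^2 = -1"
    by (metis of_int_1 of_int_eq_iff of_int_minus)
  have "q = 0"
  proof (rule ccontr)
    assume "q \<noteq> 0"
    then have "q = 1 \<or> q = -1" using tq by auto
    then show False using N tq(1) assms(1) r_nonzero r_gt r_le m_pos by (auto simp: power2_eq_square)
  qed
  then have "t = 1 \<or> t = -1" using N tq by auto
  then show ?thesis using xq \<open>q = 0\<close> by auto
qed

lemma nK_eq_2:
  assumes "\<not> unit_reducible d"
  shows "nK d = 2"
  by (rule rd_delta.nK_eq_2_if_minimal_units_trivial[OF is_rd_delta assms]) (use minimal_units in auto)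

end

locale richaud_degert_1 = richaud_degert +
  assumes d_mod_4: "d mod 4 = 1" and m_odd: "odd m"
begin

definition delta :: qelt where
  "delta = (of_int m / 2, 1 / 2)"

abbreviation "A \<equiv> rd_form d delta"

lemma four_dvd_r: "4 dvd r"
proof -
  have "m^2 mod 4 = 1" using m_odd int_square_mod_4 by simp
  then have "(d - m^2) mod 4 = 0" using d_mod_4 by (metis mod_diff_eq diff_self mod_0)
  then show ?thesis using d_eq by (simp add: dvd_eq_mod_eq_0)
qed

lemma m_ge_4: "m \<ge> 4"
proof -
  obtain k where "r = 4 * k" using four_dvd_r by (elim dvdE)
  then have "\<bar>r\<bar> \<ge> 4" using r_nonzero by auto
  then show ?thesis using r_gt r_le by auto
qed

lemma OK_coords:
  assumes "x \<in> OK d"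
  obtains z Y :: int where "x = (of_int (m * Y + 2 * z) / 2, of_int Y / 2)"
proof -
  obtain X Y where x: "x = (of_int X / 2, of_int Y / 2)" and "4 dvd X^2 - d * Y^2"
    using OK_half_integer_coords[OF assms] .
  then have "(X^2 mod 4 - (d mod 4) * (Y^2 mod 4) mod 4) mod 4 = 0"
    by (metis dvd_eq_mod_eq_0 mod_diff_eq mod_mult_eq mod_mod_trivial)
  then have "even X \<longleftrightarrow> even Y" using d_mod_4 unfolding int_square_mod_4 by (auto split: if_splits)
  then have "even (X - m * Y)" using m_odd by auto
  then obtain z where "X - m * Y = 2 * z" by (rule evenE)
  then have "x = (of_int (m * Y + 2 * z) / 2, of_int Y / 2)" using x by (simp add: algebra_simps)
  then show ?thesis using that by blast
qed

lemma tf_A: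
  "tf d A (of_int (m * Y + 2 * z) / 2, of_int Y / 2)
    = of_int d / 2 * of_int (2 * m * z^2 + (4 - r) * z * Y + 2 * m * Y^2)"
proof -
  have tf: "tf d A (of_int X / 2, of_int Y / 2)
      = of_int d / 4 * of_int (m * X^2 + (4 - m^2 - d) * X * Y + m * d * Y^2)" for X
    unfolding rd_form_def tf_def qtr_def qmul_def qadd_def qneg_def qconj_def delta_def
    by (simp add: field_simps power2_eq_square)
  have "tf d A (of_int (m * Y + 2 * z) / 2, of_int Y / 2) = of_int d / 4
      * of_int (m * (m * Y + 2 * z)^2 + (4 - m^2 - d) * (m * Y + 2 * z) * Y + m * d * Y^2)"
    by (rule tf)
  also have "m * (m * Y + 2 * z)^2 + (4 - m^2 - d) * (m * Y + 2 * z) * Y + m * d * Y^2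
      = 2 * (2 * m * z^2 + (4 - r) * z * Y + 2 * m * Y^2)"
    unfolding d_eq by (simp add: algebra_simps power2_eq_square)
  also have "(of_int d / 4 :: rat) * of_int (2 * W) = of_int d / 2 * of_int W" for W
    by (simp add: field_simps)
  finally show ?thesis .
qed

lemma tf_A_one: "tf d A (1, 0) = of_int d / 2 * of_int (2 * m)"
  using tf_A[of 0 1] by simp

lemma abs_4_minus_r: "\<bar>4 - r\<bar> \<le> 2 * m"
  using r_gt r_le m_ge_4 by linarith

lemma minimal_A_one: "minimal_at A (1, 0)"
  unfolding minimal_at_tf
proof (intro conjI ballI)
  show "(1, 0) \<in> OK d - {(0, 0)}" using OK_one by simp
  fix x assume x: "x \<in> OK d - {(0, 0)}"
  then obtain z Y where xz: "x = (of_int (m * Y + 2 * z) / 2, of_int Y / 2)" using OK_coords by blast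
  then have "z \<noteq> 0 \<or> Y \<noteq> 0" using x by auto
  then have "2 * m \<le> 2 * m * z^2 + (4 - r) * z * Y + 2 * m * Y^2"
    using reduced_binary_form_ge[of "2 * m"] m_pos abs_4_minus_r by simp
  then have "rat_of_int (2 * m) \<le> of_int (2 * m * z^2 + (4 - r) * z * Y + 2 * m * Y^2)"
    by (simp only: of_int_le_iff)
  then show "tf d A (1, 0) \<le> tf d A x"
    unfolding xz tf_A tf_A_one using d_gt_1 by (intro mult_left_mono) auto
qed

lemma is_rd_delta: "rd_delta d delta (- (r div 4))"
proof unfold_locales
  obtain r' where r': "r = 4 * r'" using four_dvd_r by (elim dvdE)
  have norm: "qnorm d delta = of_int (- (r div 4))"
    unfolding qnorm_def delta_def d_eq r' by (simp add: power_divide field_simps)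
  then show "qnorm d delta = of_int (- (r div 4))" .
  show "delta \<in> OK d" using norm unfolding OK_def qtr_def delta_def by simp
  show "- (r div 4) \<noteq> 0" using r_nonzero r' by simp
  have "e1 delta = (real_of_int m + sd) / 2" unfolding emb1_def delta_def by (simp add: of_rat_divide)
  then have "(e1 delta)^2 = ((real_of_int m + sd) / 2)^2" by (simp only:)
  moreover have "real_of_int (2 * r^2) \<le> real_of_int (2 * m^2 + r)"
    using r_square_le by (simp only: of_int_le_iff)
  ultimately show "2 * (real_of_int (- (r div 4)))^2 \<le> (e1 delta)^2"
    using m_plus_sqrt_d_square unfolding r' by (simp add: power_divide)
      (use zero_le_power2[of "real_of_int r'"] in linarith)
  obtain k where k: "4 * m^2 + 2 * r = \<bar>r\<bar> * k" using abs_r_dvd by (elim dvdE)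
  have "qtr (qscale (1 / of_int \<bar>- (r div 4)\<bar>) (qmul d delta delta)) = of_int (4 * m^2 + 2 * r) / of_int \<bar>r\<bar>"
    unfolding qtr_def qscale_def qmul_def delta_def d_eq r' by (simp add: power2_eq_square field_simps abs_mult)
  also have "\<dots> = of_int k" unfolding k using r_nonzero by simp
  finally show "qtr (qscale (1 / of_int \<bar>- (r div 4)\<bar>) (qmul d delta delta)) \<in> \<int>" by simp
  show "minimal_at (rd_form d delta) (1, 0)" by (fact minimal_A_one)
qed

lemma minimal_units:
  assumes "\<bar>r\<bar> \<noteq> 4" and "x \<in> qunits d" and "T A x = T A (1, 0)"
  shows "x = (1, 0) \<or> x = (- 1, 0)"
proof -
  obtain z Y where xz: "x = (of_int (m * Y + 2 * z) / 2, of_int Y / 2)"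
    using OK_coords assms(2) qunits_OK by blast
  obtain r' where r': "r = 4 * r'" using four_dvd_r by (elim dvdE)
  have "tf d A x = tf d A (1, 0)" using assms(3) unfolding tf_emb[symmetric] by simp
  then have "rat_of_int (2 * m * z^2 + (4 - r) * z * Y + 2 * m * Y^2) = of_int (2 * m)"
    using d_gt_1 unfolding xz tf_A tf_A_one by simp
  then have "2 * m * z^2 + (4 - r) * z * Y + 2 * m * Y^2 = 2 * m" by (simp only: of_int_eq_iff)
  then have "\<bar>z\<bar> \<le> 1 \<and> \<bar>Y\<bar> \<le> 1"
    using reduced_binary_form_eq_imp_small[of "2 * m"] m_pos abs_4_minus_r by simp
  then have zY: "z \<in> {-1, 0, 1}" "Y \<in> {-1, 0, 1}" by auto
  have "qnorm d x = 1 \<or> qnorm d x = -1" using assms(2) unfolding qunits_iff_norm by blast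
  moreover have "qnorm d x = of_int (z^2 + m * z * Y - r' * Y^2)"
    unfolding xz qnorm_def d_eq r' by (simp add: power2_eq_square field_simps)
  ultimately have N: "z^2 + m * z * Y - r' * Y^2 = 1 \<or> z^2 + m * z * Y - r' * Y^2 = -1"
    by (metis of_int_1 of_int_eq_iff of_int_minus)
  have "Y = 0"
  proof (rule ccontr)
    assume "Y \<noteq> 0"
    then have "Y = 1 \<or> Y = -1" using zY by auto
    then show False using N zY(1) assms(1) r' r_nonzero r_gt r_le m_ge_4 by (auto simp: power2_eq_square)
  qed
  then have "z = 1 \<or> z = -1" using N zY by auto
  then show ?thesis using xz \<open>Y = 0\<close> by auto
qed

lemma nK_eq_2:
  assumes "\<not> unit_reducible d"
  shows "nK d = 2"
proof (rule rd_delta.nK_eq_2_if_minimal_units_trivial[OF is_rd_delta assms])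
  fix x assume "\<bar>- (r div 4)\<bar> \<noteq> 1" "x \<in> qunits d" "T A x = T A (1, 0)"
  moreover from this have "\<bar>r\<bar> \<noteq> 4" using four_dvd_r by (auto elim!: dvdE)
  ultimately show "x = (1, 0) \<or> x = (- 1, 0)" using minimal_units by blast
qed

end

theorem theorem2:
  fixes d m r :: int
  assumes "d > 1" and "squarefree d"
    and "d = m^2 + r" and "m > 0" and "-m < r" and "r \<le> m" and "r dvd 4 * m"
    and "d mod 4 = 2 \<or> d mod 4 = 3 \<or> (d mod 4 = 1 \<and> odd m)"
    and "\<not> unit_reducible d"
  shows "nK d = 2"
proof -
  interpret real_quadratic_field d using assms(1,2) by unfold_locales
  consider (d23) "d mod 4 = 2 \<or> d mod 4 = 3" | (d1) "d mod 4 = 1" "odd m" using assms(8) by blast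
  then show ?thesis
  proof cases
    case d23
    interpret richaud_degert_23 d m r using assms(3-7) d23 by unfold_locales
    show ?thesis using assms(9) by (rule nK_eq_2)
  next
    case d1
    interpret richaud_degert_1 d m r using assms(3-7) d1 by unfold_locales
    show ?thesis using assms(9) by (rule nK_eq_2)
  qed
qed

end
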